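(* Let $R$ be a commutative ring, $M$ an $R$-module and $C$ an $R$-linear relation on $M$. If $IM\subseteq(C^{-1})'+C'$ for some ideal $I$ of $R$, then $C^\sharp\cap IM\subseteq C^\flat$; in particular $C^\sharp/C^\flat$ is an $R/I$-module. Furthermore, if $I=\mathrm{rad}(R)$ is the Jacobson radical and $R$ is perfect, then there is an $R[T,T^{-1}]$-module $P$ which is projective over $R$ and such that $P/IP\cong C^\sharp/C^\flat$ as $(R/I)[T,T^{-1}]$-modules.
   Context: An $R$-linear relation on $M$ is a submodule $C\subseteq M\oplus M$; $Cm=\{m':(m,m')\in C\}$, $C^{-1}=\{(y,x):(x,y)\in C\}$. $C''$: the set of $m\in M$ for which there exists $(m_n)_{n\in\mathbb{N}}$ with $m_0=m$ and $m_{n+1}\in Cm_n$ for all $n$; $C'$: those for which such a sequence exists with $m_n=0$ for $n\gg0$; $C^\sharp=C''\cap(C^{-1})''$; $C^\flat=C''\cap(C^{-1})'+(C^{-1})''\cap C'$. $C^\sharp/C^\flat$ is an $R[T,T^{-1}]$-module, $T$ acting by the automorphism $m+C^\flat\mapsto m'+C^\flat$ where $m'\in C^\sharp\cap(C^\flat+Cm)$. A ring is perfect if every module has a projective cover. *)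

theory Defs
  imports "HOL-Algebra.Algebra"
begin

definition mod_hom :: "('r, 'x) ring_scheme \<Rightarrow> ('r, 'a) module \<Rightarrow> ('r, 'b) module \<Rightarrow> ('a \<Rightarrow> 'b) \<Rightarrow> bool" where
  "mod_hom R A B f \<longleftrightarrow>
     f \<in> carrier A \<rightarrow> carrier B \<and>
     (\<forall>x\<in>carrier A. \<forall>y\<in>carrier A. f (x \<oplus>\<^bsub>A\<^esub> y) = f x \<oplus>\<^bsub>B\<^esub> f y) \<and>
     (\<forall>a\<in>carrier R. \<forall>x\<in>carrier A. f (a \<odot>\<^bsub>A\<^esub> x) = a \<odot>\<^bsub>B\<^esub> f x)"

definition mod_iso :: "('r, 'x) ring_scheme \<Rightarrow> ('r, 'a) module \<Rightarrow> ('r, 'b) module \<Rightarrow> ('a \<Rightarrow> 'b) \<Rightarrow> bool" where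
  "mod_iso R A B f \<longleftrightarrow> mod_hom R A B f \<and> bij_betw f (carrier A) (carrier B)"

definition quot :: "('r, 'm) module \<Rightarrow> 'm set \<Rightarrow> 'm set \<Rightarrow> ('r, 'm set) module" where
  "quot M S N =
    \<lparr>carrier = {N +>\<^bsub>M\<^esub> x | x. x \<in> S},
     monoid.mult = (\<lambda>A B. undefined), one = undefined,
     ring.zero = N,
     ring.add = (\<lambda>A B. A <+>\<^bsub>M\<^esub> B),
     module.smult = (\<lambda>a A. N <+>\<^bsub>M\<^esub> ((\<lambda>x. a \<odot>\<^bsub>M\<^esub> x) ` A))\<rparr>"

inductive_set ideal_mod :: "'r set \<Rightarrow> ('r, 'm) module \<Rightarrow> 'm set" for I M where
  zero: "\<zero>\<^bsub>M\<^esub> \<in> ideal_mod I M"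
| step: "x \<in> ideal_mod I M \<Longrightarrow> a \<in> I \<Longrightarrow> m \<in> carrier M \<Longrightarrow>
         x \<oplus>\<^bsub>M\<^esub> (a \<odot>\<^bsub>M\<^esub> m) \<in> ideal_mod I M"

definition lin_rel :: "('r, 'x) ring_scheme \<Rightarrow> ('r, 'm) module \<Rightarrow> ('m \<times> 'm) set \<Rightarrow> bool" where
  "lin_rel R M C \<longleftrightarrow>
     C \<subseteq> carrier M \<times> carrier M \<and>
     (\<zero>\<^bsub>M\<^esub>, \<zero>\<^bsub>M\<^esub>) \<in> C \<and>
     (\<forall>x y x' y'. (x, y) \<in> C \<longrightarrow> (x', y') \<in> C \<longrightarrow> (x \<oplus>\<^bsub>M\<^esub> x', y \<oplus>\<^bsub>M\<^esub> y') \<in> C) \<and>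
     (\<forall>a\<in>carrier R. \<forall>x y. (x, y) \<in> C \<longrightarrow> (a \<odot>\<^bsub>M\<^esub> x, a \<odot>\<^bsub>M\<^esub> y) \<in> C)"

text \<open>C'' : elements admitting an infinite C-chain m_0 = m, m_(n+1) in C m_n.\<close>
definition rel_inf :: "('m \<times> 'm) set \<Rightarrow> 'm set" where
  "rel_inf C = {m. \<exists>f :: nat \<Rightarrow> 'm. f 0 = m \<and> (\<forall>n. (f n, f (Suc n)) \<in> C)}"

text \<open>C' : such chains that are eventually zero.\<close>
definition rel_fin :: "('r, 'm) module \<Rightarrow> ('m \<times> 'm) set \<Rightarrow> 'm set" where
  "rel_fin M C = {m. \<exists>f :: nat \<Rightarrow> 'm. f 0 = m \<and> (\<forall>n. (f n, f (Suc n)) \<in> C) \<and>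
                       (\<exists>N. \<forall>n\<ge>N. f n = \<zero>\<^bsub>M\<^esub>)}"

definition rel_sharp :: "('m \<times> 'm) set \<Rightarrow> 'm set" where
  "rel_sharp C = rel_inf C \<inter> rel_inf (C\<inverse>)"

definition rel_flat :: "('r, 'm) module \<Rightarrow> ('m \<times> 'm) set \<Rightarrow> 'm set" where
  "rel_flat M C = (rel_inf C \<inter> rel_fin M (C\<inverse>)) <+>\<^bsub>M\<^esub> (rel_inf (C\<inverse>) \<inter> rel_fin M C)"

definition sharp_T :: "('r, 'm) module \<Rightarrow> ('m \<times> 'm) set \<Rightarrow> 'm set \<Rightarrow> 'm set" where
  "sharp_T M C U = (THE V. \<exists>m\<in>U. \<exists>m'. m' \<in> rel_sharp C \<inter> (rel_flat M C <+>\<^bsub>M\<^esub> (C `` {m})) \<and>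
                             V = rel_flat M C +>\<^bsub>M\<^esub> m')"

definition quot_map :: "('r, 'p) module \<Rightarrow> 'p set \<Rightarrow> ('p \<Rightarrow> 'p) \<Rightarrow> 'p set \<Rightarrow> 'p set" where
  "quot_map P N t U = N <+>\<^bsub>P\<^esub> (t ` U)"

definition free_carrier :: "('r, 'x) ring_scheme \<Rightarrow> ('r, 'p) module \<Rightarrow> ('p \<Rightarrow> 'r) set" where
  "free_carrier R P = {f. (\<forall>q. f q \<in> carrier R) \<and> (\<forall>q. q \<notin> carrier P \<longrightarrow> f q = \<zero>\<^bsub>R\<^esub>) \<and>
                          finite {q. f q \<noteq> \<zero>\<^bsub>R\<^esub>}}"

definition free_eps :: "('r, 'x) ring_scheme \<Rightarrow> ('r, 'p) module \<Rightarrow> ('p \<Rightarrow> 'r) \<Rightarrow> 'p" where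
  "free_eps R P f = (\<Oplus>\<^bsub>P\<^esub>q\<in>{q \<in> carrier P. f q \<noteq> \<zero>\<^bsub>R\<^esub>}. f q \<odot>\<^bsub>P\<^esub> q)"

text \<open>P is projective: P is a direct summand of a free module, i.e. the canonical
  surjection from the free module on P onto P has an R-linear section.\<close>
definition projective :: "('r, 'x) ring_scheme \<Rightarrow> ('r, 'p) module \<Rightarrow> bool" where
  "projective R P \<longleftrightarrow> module R P \<and>
     (\<exists>s. (\<forall>p\<in>carrier P. s p \<in> free_carrier R P \<and> free_eps R P (s p) = p) \<and>
          (\<forall>p\<in>carrier P. \<forall>q\<in>carrier P. s (p \<oplus>\<^bsub>P\<^esub> q) = (\<lambda>z. s p z \<oplus>\<^bsub>R\<^esub> s q z)) \<and>
          (\<forall>a\<in>carrier R. \<forall>p\<in>carrier P. s (a \<odot>\<^bsub>P\<^esub> p) = (\<lambda>z. a \<otimes>\<^bsub>R\<^esub> s p z)))"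

definition proj_cover :: "('r, 'x) ring_scheme \<Rightarrow> ('r, 'n) module \<Rightarrow> ('r, 'p) module \<Rightarrow> ('p \<Rightarrow> 'n) \<Rightarrow> bool" where
  "proj_cover R N P \<pi> \<longleftrightarrow>
     projective R P \<and> mod_hom R P N \<pi> \<and> \<pi> ` carrier P = carrier N \<and>
     (\<forall>L. submodule L R P \<longrightarrow>
          ({x \<in> carrier P. \<pi> x = \<zero>\<^bsub>N\<^esub>} <+>\<^bsub>P\<^esub> L) = carrier P \<longrightarrow> L = carrier P)"

text \<open>Since HOL cannot quantify
  over types inside a formula, the modules are those with carriers in the type 'n
  and the covers are sought with carriers in the type 'p.\<close>
definition perfect_wrt :: "'n itself \<Rightarrow> 'p itself \<Rightarrow> ('r, 'x) ring_scheme \<Rightarrow> bool" where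
  "perfect_wrt _ _ R \<longleftrightarrow>
     (\<forall>N :: ('r, 'n) module. module R N \<longrightarrow>
        (\<exists>P :: ('r, 'p) module. \<exists>\<pi>. proj_cover R N P \<pi>))"

definition jacobson :: "('r, 'x) ring_scheme \<Rightarrow> 'r set" where
  "jacobson R = carrier R \<inter> \<Inter> {J. maximalideal J R}"

end

theory Submission
  imports Defs
begin

text \<open>
  If x \<in> C\<sharp> lies in IM \<subseteq> (C\<inverse>)' + C', write x = u + v with u \<in> (C\<inverse>)' and
  v \<in> C'. Since C'' and (C\<inverse>)'' are submodules containing C' and (C\<inverse>)', we get
  u = x - v \<in> C'' and v = x - u \<in> (C\<inverse>)'', so x \<in> C\<flat>. Hence rad(R) annihilates
  N = C\<sharp>/C\<flat>, on which T is an automorphism.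

  Let \<pi> : P \<rightarrow> N be a projective cover. Its kernel contains rad(R)P because rad(R)N = 0,
  and is contained in rad(R)P: if some coordinate of a kernel element (with respect to a
  splitting of a free module onto P) lay outside a maximal ideal J, the elements whose
  coordinate lies in J would form a proper submodule supplementing the kernel. Lifting
  T \<circ> \<pi> along \<pi> gives an endomorphism t of P; as the kernel is superfluous, t and a
  section of t are onto, so t is an automorphism, and \<pi> induces an isomorphism
  P/rad(R)P \<cong> N intertwining t and T.
\<close>

lemma mem_set_add_iff: "x \<in> A <+>\<^bsub>G\<^esub> B \<longleftrightarrow> (\<exists>a\<in>A. \<exists>b\<in>B. x = a \<oplus>\<^bsub>G\<^esub> b)"
  unfolding set_add_def' by auto

lemma mem_a_r_coset_iff: "x \<in> H +>\<^bsub>G\<^esub> a \<longleftrightarrow> (\<exists>h\<in>H. x = h \<oplus>\<^bsub>G\<^esub> a)"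
  unfolding a_r_coset_def' by auto

context module
begin

lemma submodule_zero_closed: "submodule H R M \<Longrightarrow> \<zero>\<^bsub>M\<^esub> \<in> H"
  using submodule.axioms(1) subgroup.one_closed by fastforce

lemma submodule_minus_closed:
  "submodule H R M \<Longrightarrow> a \<in> H \<Longrightarrow> b \<in> H \<Longrightarrow> a \<ominus>\<^bsub>M\<^esub> b \<in> H"
  unfolding a_minus_def using submoduleE(3,5) by blast

lemma submodule_Int:
  assumes A: "submodule A R M" and B: "submodule B R M"
  shows "submodule (A \<inter> B) R M"
proof (rule submoduleI)
  note a = submoduleE[OF A] and b = submoduleE[OF B]
  show "A \<inter> B \<subseteq> carrier M" using a(1) by blast
  show "\<zero>\<^bsub>M\<^esub> \<in> A \<inter> B" using submodule_zero_closed[OF A] submodule_zero_closed[OF B] by blast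
  show "\<ominus>\<^bsub>M\<^esub> x \<in> A \<inter> B" if "x \<in> A \<inter> B" for x using a(3) b(3) that by blast
  show "x \<oplus>\<^bsub>M\<^esub> y \<in> A \<inter> B" if "x \<in> A \<inter> B" "y \<in> A \<inter> B" for x y
    using a(5) b(5) that by blast
  show "c \<odot>\<^bsub>M\<^esub> x \<in> A \<inter> B" if "c \<in> carrier R" "x \<in> A \<inter> B" for c x
    using a(4) b(4) that by blast
qed

lemma submodule_set_add:
  assumes A: "submodule A R M" and B: "submodule B R M"
  shows "submodule (A <+>\<^bsub>M\<^esub> B) R M"
proof (rule submoduleI)
  note a = submoduleE[OF A] and b = submoduleE[OF B]
  show "A <+>\<^bsub>M\<^esub> B \<subseteq> carrier M" using a(1) b(1) by (rule set_add_closed)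
  show "\<zero>\<^bsub>M\<^esub> \<in> A <+>\<^bsub>M\<^esub> B"
    using submodule_zero_closed[OF A] submodule_zero_closed[OF B] by (force simp: mem_set_add_iff)
  show "\<ominus>\<^bsub>M\<^esub> x \<in> A <+>\<^bsub>M\<^esub> B" if x: "x \<in> A <+>\<^bsub>M\<^esub> B" for x
  proof -
    obtain u v where "u \<in> A" "v \<in> B" "x = u \<oplus>\<^bsub>M\<^esub> v"
      using x unfolding mem_set_add_iff by blast
    moreover have "\<ominus>\<^bsub>M\<^esub> (u \<oplus>\<^bsub>M\<^esub> v) = \<ominus>\<^bsub>M\<^esub> u \<oplus>\<^bsub>M\<^esub> \<ominus>\<^bsub>M\<^esub> v"
      using calculation a(1) b(1) by (auto intro: minus_add)
    ultimately show ?thesis using a(3) b(3) unfolding mem_set_add_iff by blast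
  qed
  show "x \<oplus>\<^bsub>M\<^esub> y \<in> A <+>\<^bsub>M\<^esub> B" if xy: "x \<in> A <+>\<^bsub>M\<^esub> B" "y \<in> A <+>\<^bsub>M\<^esub> B" for x y
  proof -
    obtain u v u' v' where uv: "u \<in> A" "v \<in> B" "x = u \<oplus>\<^bsub>M\<^esub> v"
      and uv': "u' \<in> A" "v' \<in> B" "y = u' \<oplus>\<^bsub>M\<^esub> v'"
      using xy unfolding mem_set_add_iff by blast
    then have "x \<oplus>\<^bsub>M\<^esub> y = (u \<oplus>\<^bsub>M\<^esub> u') \<oplus>\<^bsub>M\<^esub> (v \<oplus>\<^bsub>M\<^esub> v')"
      using a(1) b(1) by (simp add: subset_iff a_ac)
    then show ?thesis using uv uv' a(5) b(5) unfolding mem_set_add_iff by blast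
  qed
  show "c \<odot>\<^bsub>M\<^esub> x \<in> A <+>\<^bsub>M\<^esub> B" if c: "c \<in> carrier R" and x: "x \<in> A <+>\<^bsub>M\<^esub> B" for c x
  proof -
    obtain u v where uv: "u \<in> A" "v \<in> B" "x = u \<oplus>\<^bsub>M\<^esub> v"
      using x unfolding mem_set_add_iff by blast
    then have "c \<odot>\<^bsub>M\<^esub> x = c \<odot>\<^bsub>M\<^esub> u \<oplus>\<^bsub>M\<^esub> c \<odot>\<^bsub>M\<^esub> v"
      using c a(1) b(1) by (auto simp: smult_r_distr subset_iff)
    then show ?thesis using uv c a(4) b(4) unfolding mem_set_add_iff by blast
  qed
qed

lemma set_add_commute: "A \<subseteq> carrier M \<Longrightarrow> B \<subseteq> carrier M \<Longrightarrow> A <+>\<^bsub>M\<^esub> B = B <+>\<^bsub>M\<^esub> A"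
  unfolding mem_set_add_iff set_eq_iff by (metis a_comm subsetD)

lemma submodule_abelian_subgroup: "submodule H R M \<Longrightarrow> abelian_subgroup H M"
  by (intro abelian_subgroupI3 additive_subgroupI submodule.axioms(1) abelian_group.intro
      abelian_monoid_axioms abelian_group_axioms)

lemma submodule_rcos_self: "submodule H R M \<Longrightarrow> x \<in> carrier M \<Longrightarrow> x \<in> H +>\<^bsub>M\<^esub> x"
  by (rule abelian_subgroup.a_rcos_self[OF submodule_abelian_subgroup])

lemma submodule_rcos_eq_iff:
  assumes H: "submodule H R M" and x: "x \<in> carrier M" and y: "y \<in> carrier M"
  shows "H +>\<^bsub>M\<^esub> x = H +>\<^bsub>M\<^esub> y \<longleftrightarrow> x \<ominus>\<^bsub>M\<^esub> y \<in> H"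
proof -
  interpret abelian_subgroup H M by (rule submodule_abelian_subgroup[OF H])
  have "x \<in> H +>\<^bsub>M\<^esub> y \<longleftrightarrow> x \<ominus>\<^bsub>M\<^esub> y \<in> H"
    using a_rcos_module[OF y x] by (simp add: a_minus_def)
  then show ?thesis using a_rcos_self[OF x] a_repr_independence'[OF _ y] by blast
qed

lemma submodule_rcos_const: "submodule H R M \<Longrightarrow> h \<in> H \<Longrightarrow> H +>\<^bsub>M\<^esub> h = H"
  by (rule abelian_subgroup.a_rcos_const[OF submodule_abelian_subgroup])

end

section \<open>Subquotient modules\<close>

lemma quot_simps:
  "carrier (quot M S F) = {F +>\<^bsub>M\<^esub> x | x. x \<in> S}"
  "(\<oplus>\<^bsub>quot M S F\<^esub>) = set_add M"
  "\<zero>\<^bsub>quot M S F\<^esub> = F"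
  "smult (quot M S F) = (\<lambda>a U. F <+>\<^bsub>M\<^esub> ((\<lambda>x. a \<odot>\<^bsub>M\<^esub> x) ` U))"
  unfolding quot_def by auto

lemma quot_carrierE:
  assumes "U \<in> carrier (quot M S F)"
  obtains x where "x \<in> S" and "U = F +>\<^bsub>M\<^esub> x"
  using assms unfolding quot_simps by blast

lemma rcos_in_quot_carrier: "x \<in> S \<Longrightarrow> F +>\<^bsub>M\<^esub> x \<in> carrier (quot M S F)"
  unfolding quot_simps by blast

text \<open>The constants quot, ideal_mod, ... of the definitions take module records, not
  record schemes; lemmas about them live in this type-restricted copy of module.\<close>

locale plain_module = module R M
  for R :: "('a, 'b) ring_scheme" (structure) and M :: "('a, 'c) module" (structure)
begin

lemma quot_add_rcos:
  assumes "submodule F R M" and "x \<in> carrier M" and "y \<in> carrier M"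
  shows "(F +>\<^bsub>M\<^esub> x) \<oplus>\<^bsub>quot M S F\<^esub> (F +>\<^bsub>M\<^esub> y) = F +>\<^bsub>M\<^esub> (x \<oplus>\<^bsub>M\<^esub> y)"
  unfolding quot_simps
  by (rule abelian_subgroup.a_rcos_sum[OF submodule_abelian_subgroup[OF assms(1)] assms(2,3)])

lemma quot_smult_rcos:
  assumes F: "submodule F R M" and a: "a \<in> carrier R" and x: "x \<in> carrier M"
  shows "a \<odot>\<^bsub>quot M S F\<^esub> (F +>\<^bsub>M\<^esub> x) = F +>\<^bsub>M\<^esub> (a \<odot>\<^bsub>M\<^esub> x)"
proof -
  note f = submoduleE[OF F]
  have "z \<in> F <+>\<^bsub>M\<^esub> ((\<lambda>z. a \<odot>\<^bsub>M\<^esub> z) ` (F +>\<^bsub>M\<^esub> x)) \<longleftrightarrow> z \<in> F +>\<^bsub>M\<^esub> (a \<odot>\<^bsub>M\<^esub> x)" for z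
  proof
    assume "z \<in> F <+>\<^bsub>M\<^esub> ((\<lambda>z. a \<odot>\<^bsub>M\<^esub> z) ` (F +>\<^bsub>M\<^esub> x))"
    then obtain f g where fg: "f \<in> F" "g \<in> F" "z = f \<oplus>\<^bsub>M\<^esub> a \<odot>\<^bsub>M\<^esub> (g \<oplus>\<^bsub>M\<^esub> x)"
      unfolding mem_set_add_iff a_r_coset_def' by blast
    then have "z = (f \<oplus>\<^bsub>M\<^esub> a \<odot>\<^bsub>M\<^esub> g) \<oplus>\<^bsub>M\<^esub> a \<odot>\<^bsub>M\<^esub> x"
      using f(1) a x by (auto simp: smult_r_distr a_assoc subset_iff)
    moreover have "f \<oplus>\<^bsub>M\<^esub> a \<odot>\<^bsub>M\<^esub> g \<in> F" using f(4,5) fg a by blast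
    ultimately show "z \<in> F +>\<^bsub>M\<^esub> (a \<odot>\<^bsub>M\<^esub> x)" unfolding mem_a_r_coset_iff by blast
  next
    assume "z \<in> F +>\<^bsub>M\<^esub> (a \<odot>\<^bsub>M\<^esub> x)"
    then obtain f where "f \<in> F" "z = f \<oplus>\<^bsub>M\<^esub> a \<odot>\<^bsub>M\<^esub> x" unfolding mem_a_r_coset_iff by blast
    then show "z \<in> F <+>\<^bsub>M\<^esub> ((\<lambda>z. a \<odot>\<^bsub>M\<^esub> z) ` (F +>\<^bsub>M\<^esub> x))"
      using submodule_rcos_self[OF F x] unfolding mem_set_add_iff by blast
  qed
  then show ?thesis unfolding quot_simps by blast
qed

lemma quot_abelian_group:
  assumes S: "submodule S R M" and F: "submodule F R M"
  shows "abelian_group (quot M S F)"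
proof (rule abelian_groupI)
  let ?Q = "quot M S F"
  note s = submoduleE[OF S]
  have add: "(F +>\<^bsub>M\<^esub> x) \<oplus>\<^bsub>?Q\<^esub> (F +>\<^bsub>M\<^esub> y) = F +>\<^bsub>M\<^esub> (x \<oplus>\<^bsub>M\<^esub> y)"
    if "x \<in> S" "y \<in> S" for x y
    using quot_add_rcos[OF F] that s(1) by blast
  have zero_S: "\<zero>\<^bsub>M\<^esub> \<in> S" by (rule submodule_zero_closed[OF S])
  have zero: "\<zero>\<^bsub>?Q\<^esub> = F +>\<^bsub>M\<^esub> \<zero>\<^bsub>M\<^esub>"
    using submodule_rcos_const[OF F submodule_zero_closed[OF F]] by (simp add: quot_simps)
  show "\<zero>\<^bsub>?Q\<^esub> \<in> carrier ?Q" using zero rcos_in_quot_carrier[OF zero_S] by simp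
  fix U V W
  assume U: "U \<in> carrier ?Q" and V: "V \<in> carrier ?Q" and W: "W \<in> carrier ?Q"
  obtain x where x: "x \<in> S" "U = F +>\<^bsub>M\<^esub> x" using U by (rule quot_carrierE)
  obtain y where y: "y \<in> S" "V = F +>\<^bsub>M\<^esub> y" using V by (rule quot_carrierE)
  obtain w where w: "w \<in> S" "W = F +>\<^bsub>M\<^esub> w" using W by (rule quot_carrierE)
  show "U \<oplus>\<^bsub>?Q\<^esub> V \<in> carrier ?Q"
    using x y add rcos_in_quot_carrier[OF s(5)[OF x(1) y(1)]] by simp
  show "U \<oplus>\<^bsub>?Q\<^esub> V \<oplus>\<^bsub>?Q\<^esub> W = U \<oplus>\<^bsub>?Q\<^esub> (V \<oplus>\<^bsub>?Q\<^esub> W)"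
    using x y w add s(5) subsetD[OF s(1)] by (simp add: a_assoc)
  show "U \<oplus>\<^bsub>?Q\<^esub> V = V \<oplus>\<^bsub>?Q\<^esub> U"
    using x y add subsetD[OF s(1)] by (simp add: a_comm)
  show "\<zero>\<^bsub>?Q\<^esub> \<oplus>\<^bsub>?Q\<^esub> U = U"
    using x zero add[OF zero_S] subsetD[OF s(1)] by simp
  have "(F +>\<^bsub>M\<^esub> \<ominus>\<^bsub>M\<^esub> x) \<oplus>\<^bsub>?Q\<^esub> U = \<zero>\<^bsub>?Q\<^esub>"
    using x zero add[OF s(3)[OF x(1)] x(1)] subsetD[OF s(1)] by (simp add: l_neg)
  then show "\<exists>V'\<in>carrier ?Q. V' \<oplus>\<^bsub>?Q\<^esub> U = \<zero>\<^bsub>?Q\<^esub>"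
    using rcos_in_quot_carrier[OF s(3)[OF x(1)]] by blast
qed

lemma quot_module:
  assumes S: "submodule S R M" and F: "submodule F R M"
  shows "module R (quot M S F)"
proof (rule moduleI)
  let ?Q = "quot M S F"
  note s = submoduleE[OF S]
  have add: "(F +>\<^bsub>M\<^esub> x) \<oplus>\<^bsub>?Q\<^esub> (F +>\<^bsub>M\<^esub> y) = F +>\<^bsub>M\<^esub> (x \<oplus>\<^bsub>M\<^esub> y)"
    if "x \<in> S" "y \<in> S" for x y
    using quot_add_rcos[OF F] that s(1) by blast
  have smult: "a \<odot>\<^bsub>?Q\<^esub> (F +>\<^bsub>M\<^esub> x) = F +>\<^bsub>M\<^esub> (a \<odot>\<^bsub>M\<^esub> x)"
    if "a \<in> carrier R" "x \<in> S" for a x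
    using quot_smult_rcos[OF F] that s(1) by blast
  show "cring R" by (rule is_cring)
  show "abelian_group ?Q" by (rule quot_abelian_group[OF S F])
  fix a b U V
  assume a: "a \<in> carrier R" and b: "b \<in> carrier R"
    and U: "U \<in> carrier ?Q" and V: "V \<in> carrier ?Q"
  obtain x where x: "x \<in> S" "U = F +>\<^bsub>M\<^esub> x" using U by (rule quot_carrierE)
  obtain y where y: "y \<in> S" "V = F +>\<^bsub>M\<^esub> y" using V by (rule quot_carrierE)
  show "a \<odot>\<^bsub>?Q\<^esub> U \<in> carrier ?Q"
    using x smult[OF a] rcos_in_quot_carrier[OF s(4)[OF a x(1)]] by simp
  show "(a \<oplus>\<^bsub>R\<^esub> b) \<odot>\<^bsub>?Q\<^esub> U = a \<odot>\<^bsub>?Q\<^esub> U \<oplus>\<^bsub>?Q\<^esub> b \<odot>\<^bsub>?Q\<^esub> U"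
    using x a b smult add s(4) subsetD[OF s(1)] by (simp add: smult_l_distr)
  show "a \<odot>\<^bsub>?Q\<^esub> (U \<oplus>\<^bsub>?Q\<^esub> V) = a \<odot>\<^bsub>?Q\<^esub> U \<oplus>\<^bsub>?Q\<^esub> a \<odot>\<^bsub>?Q\<^esub> V"
    using x y a smult add s(4,5) subsetD[OF s(1)] by (simp add: smult_r_distr)
  show "(a \<otimes>\<^bsub>R\<^esub> b) \<odot>\<^bsub>?Q\<^esub> U = a \<odot>\<^bsub>?Q\<^esub> (b \<odot>\<^bsub>?Q\<^esub> U)"
    using x a b smult s(4) subsetD[OF s(1)] by (simp add: smult_assoc1)
next
  fix U assume "U \<in> carrier (quot M S F)"
  then obtain x where x: "x \<in> S" "U = F +>\<^bsub>M\<^esub> x" by (rule quot_carrierE)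
  then show "\<one>\<^bsub>R\<^esub> \<odot>\<^bsub>quot M S F\<^esub> U = U"
    using quot_smult_rcos[OF F one_closed] subsetD[OF submoduleE(1)[OF S]] by simp
qed

lemma quot_smult_eq_zero:
  assumes F: "submodule F R M" and S: "S \<subseteq> carrier M" and a: "a \<in> carrier R"
    and aS: "\<And>x. x \<in> S \<Longrightarrow> a \<odot>\<^bsub>M\<^esub> x \<in> F" and U: "U \<in> carrier (quot M S F)"
  shows "a \<odot>\<^bsub>quot M S F\<^esub> U = \<zero>\<^bsub>quot M S F\<^esub>"
proof -
  obtain x where x: "x \<in> S" "U = F +>\<^bsub>M\<^esub> x" using U by (rule quot_carrierE)
  then have "a \<odot>\<^bsub>quot M S F\<^esub> U = F +>\<^bsub>M\<^esub> (a \<odot>\<^bsub>M\<^esub> x)"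
    using quot_smult_rcos[OF F a] S by blast
  also have "\<dots> = F" using submodule_rcos_const[OF F aS[OF x(1)]] .
  finally show ?thesis by (simp add: quot_simps)
qed

lemma ideal_mod_subset_carrier: "I \<subseteq> carrier R \<Longrightarrow> ideal_mod I M \<subseteq> carrier M"
proof
  fix x assume I: "I \<subseteq> carrier R" and x: "x \<in> ideal_mod I M"
  from x show "x \<in> carrier M" using I by (induction x rule: ideal_mod.induct) auto
qed

lemma ideal_mod_add_closed:
  assumes I: "I \<subseteq> carrier R" and x: "x \<in> ideal_mod I M" and y: "y \<in> ideal_mod I M"
  shows "x \<oplus>\<^bsub>M\<^esub> y \<in> ideal_mod I M"
  using y
proof induction
  case zero
  then show ?case using x ideal_mod_subset_carrier[OF I] by auto
next
  case (step z a m)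
  have "x \<in> carrier M" "z \<in> carrier M" "a \<in> carrier R" "m \<in> carrier M"
    using step x ideal_mod_subset_carrier[OF I] I by auto
  then have "x \<oplus>\<^bsub>M\<^esub> (z \<oplus>\<^bsub>M\<^esub> a \<odot>\<^bsub>M\<^esub> m) = (x \<oplus>\<^bsub>M\<^esub> z) \<oplus>\<^bsub>M\<^esub> a \<odot>\<^bsub>M\<^esub> m"
    by (simp add: a_assoc)
  then show ?case using step ideal_mod.step by metis
qed

lemma ideal_mod_smult_mem:
  "I \<subseteq> carrier R \<Longrightarrow> a \<in> I \<Longrightarrow> m \<in> carrier M \<Longrightarrow> a \<odot>\<^bsub>M\<^esub> m \<in> ideal_mod I M"
  using ideal_mod.step[OF ideal_mod.zero, of a I m M] by (auto simp: subset_iff)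

lemma ideal_mod_finsum:
  assumes I: "I \<subseteq> carrier R" and fin: "finite B" and B: "B \<subseteq> carrier M"
    and c: "\<And>q. q \<in> B \<Longrightarrow> c q \<in> I"
  shows "(\<Oplus>\<^bsub>M\<^esub>q\<in>B. c q \<odot>\<^bsub>M\<^esub> q) \<in> ideal_mod I M"
  using fin B c
proof (induction B rule: finite_induct)
  case empty
  then show ?case by (simp add: ideal_mod.zero)
next
  case (insert x B)
  have "(\<Oplus>\<^bsub>M\<^esub>q\<in>insert x B. c q \<odot>\<^bsub>M\<^esub> q) = c x \<odot>\<^bsub>M\<^esub> x \<oplus>\<^bsub>M\<^esub> (\<Oplus>\<^bsub>M\<^esub>q\<in>B. c q \<odot>\<^bsub>M\<^esub> q)"
    using insert I by (subst finsum_insert) (auto simp: Pi_def subset_iff)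
  moreover have "c x \<odot>\<^bsub>M\<^esub> x \<in> ideal_mod I M" using insert I by (intro ideal_mod_smult_mem) auto
  ultimately show ?case using insert ideal_mod_add_closed[OF I] by auto
qed

end

section \<open>Chains of a relation\<close>

lemma rel_inf_prepend:
  assumes "(y, x) \<in> E" and "x \<in> rel_inf E"
  shows "y \<in> rel_inf E"
proof -
  obtain f where "f 0 = x" "\<forall>n. (f n, f (Suc n)) \<in> E"
    using assms(2) unfolding rel_inf_def by auto
  then show ?thesis
    using assms(1) unfolding rel_inf_def by (auto intro!: exI[of _ "case_nat y f"] split: nat.split)
qed

lemma rel_fin_prepend:
  assumes "(y, x) \<in> E" and "x \<in> rel_fin M E"
  shows "y \<in> rel_fin M E"
proof -
  obtain f N where f: "f 0 = x" "\<forall>n. (f n, f (Suc n)) \<in> E" "\<forall>n\<ge>N. f n = \<zero>\<^bsub>M\<^esub>"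
    using assms(2) unfolding rel_fin_def by auto
  define g where "g = case_nat y f"
  have "\<forall>n. (g n, g (Suc n)) \<in> E" using f assms(1) by (auto simp: g_def split: nat.split)
  moreover have "\<forall>n\<ge>Suc N. g n = \<zero>\<^bsub>M\<^esub>" using f(3) by (auto simp: g_def split: nat.split)
  moreover have "g 0 = y" by (simp add: g_def)
  ultimately show ?thesis unfolding rel_fin_def by blast
qed

lemma rel_inf_step:
  assumes "x \<in> rel_inf E"
  obtains y where "(x, y) \<in> E" and "y \<in> rel_inf E"
proof -
  obtain f where f: "f 0 = x" "\<forall>n. (f n, f (Suc n)) \<in> E"
    using assms unfolding rel_inf_def by auto
  have "f (Suc 0) \<in> rel_inf E"
    unfolding rel_inf_def using f(2) by (intro CollectI exI[of _ "\<lambda>n. f (Suc n)"]) simp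
  then show ?thesis using that f by metis
qed

lemma rel_fin_step:
  assumes "x \<in> rel_fin M E"
  obtains y where "(x, y) \<in> E" and "y \<in> rel_fin M E"
proof -
  obtain f N where f: "f 0 = x" "\<forall>n. (f n, f (Suc n)) \<in> E" "\<forall>n\<ge>N. f n = \<zero>\<^bsub>M\<^esub>"
    using assms unfolding rel_fin_def by auto
  have "f (Suc 0) \<in> rel_fin M E"
    unfolding rel_fin_def using f(2,3) by (auto intro!: exI[of _ "\<lambda>n. f (Suc n)"] exI[of _ N])
  then show ?thesis using that f by metis
qed

lemma rel_fin_subset_rel_inf: "rel_fin M E \<subseteq> rel_inf E"
  unfolding rel_fin_def rel_inf_def by auto

lemma rel_sharp_converse: "rel_sharp (E\<inverse>) = rel_sharp E"
  unfolding rel_sharp_def by auto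

lemma rel_sharp_step:
  assumes "x \<in> rel_sharp E"
  obtains y where "(x, y) \<in> E" and "y \<in> rel_sharp E"
proof -
  have x: "x \<in> rel_inf E" "x \<in> rel_inf (E\<inverse>)" using assms unfolding rel_sharp_def by auto
  obtain y where y: "(x, y) \<in> E" "y \<in> rel_inf E" using x(1) by (rule rel_inf_step)
  have "y \<in> rel_inf (E\<inverse>)" using y(1) x(2) by (intro rel_inf_prepend[of y x]) auto
  then show ?thesis using that y unfolding rel_sharp_def by blast
qed

lemma rel_sharp_step_back:
  assumes "y \<in> rel_sharp E"
  obtains x where "(x, y) \<in> E" and "x \<in> rel_sharp E"
proof -
  have "y \<in> rel_sharp (E\<inverse>)" using assms by (simp only: rel_sharp_converse)
  then obtain x where "(y, x) \<in> E\<inverse>" "x \<in> rel_sharp (E\<inverse>)" by (rule rel_sharp_step)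
  then show ?thesis using that by (simp add: rel_sharp_converse)
qed

section \<open>Linear relations\<close>

locale linear_relation = plain_module +
  fixes C :: "('c \<times> 'c) set"
  assumes lin_rel: "lin_rel R M C"
begin

lemma rel_carrier: "(x, y) \<in> C \<Longrightarrow> x \<in> carrier M \<and> y \<in> carrier M"
  using lin_rel unfolding lin_rel_def by auto

lemma rel_zero: "(\<zero>\<^bsub>M\<^esub>, \<zero>\<^bsub>M\<^esub>) \<in> C"
  using lin_rel unfolding lin_rel_def by auto

lemma rel_add: "(x, y) \<in> C \<Longrightarrow> (x', y') \<in> C \<Longrightarrow> (x \<oplus>\<^bsub>M\<^esub> x', y \<oplus>\<^bsub>M\<^esub> y') \<in> C"
  using lin_rel unfolding lin_rel_def by auto

lemma rel_smult: "a \<in> carrier R \<Longrightarrow> (x, y) \<in> C \<Longrightarrow> (a \<odot>\<^bsub>M\<^esub> x, a \<odot>\<^bsub>M\<^esub> y) \<in> C"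
  using lin_rel unfolding lin_rel_def by auto

lemma rel_uminus:
  assumes "(x, y) \<in> C"
  shows "(\<ominus>\<^bsub>M\<^esub> x, \<ominus>\<^bsub>M\<^esub> y) \<in> C"
proof -
  have "(\<ominus> \<one> \<odot>\<^bsub>M\<^esub> x, \<ominus> \<one> \<odot>\<^bsub>M\<^esub> y) \<in> C" using assms by (intro rel_smult) auto
  then show ?thesis using rel_carrier[OF assms] by (simp add: smult_l_minus)
qed

lemma rel_minus: "(x, y) \<in> C \<Longrightarrow> (x', y') \<in> C \<Longrightarrow> (x \<ominus>\<^bsub>M\<^esub> x', y \<ominus>\<^bsub>M\<^esub> y') \<in> C"
  unfolding a_minus_def by (intro rel_add rel_uminus)

lemma linear_relation_converse: "linear_relation R M (C\<inverse>)"
  using lin_rel unfolding linear_relation_def linear_relation_axioms_def lin_rel_def plain_module_def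
  by (auto simp: module_axioms)

lemma submodule_rel_inf: "submodule (rel_inf C) R M"
proof (rule submoduleI)
  show "rel_inf C \<subseteq> carrier M"
    unfolding rel_inf_def using rel_carrier by blast
  show "\<zero>\<^bsub>M\<^esub> \<in> rel_inf C"
    unfolding rel_inf_def using rel_zero by (auto intro!: exI[of _ "\<lambda>n. \<zero>\<^bsub>M\<^esub>"])
  show "\<ominus>\<^bsub>M\<^esub> x \<in> rel_inf C" if x: "x \<in> rel_inf C" for x
  proof -
    obtain f where "f 0 = x" "\<forall>n. (f n, f (Suc n)) \<in> C"
      using x unfolding rel_inf_def by blast
    then show ?thesis unfolding rel_inf_def
      by (auto intro!: rel_uminus exI[of _ "\<lambda>n. \<ominus>\<^bsub>M\<^esub> (f n)"])
  qed
  show "x \<oplus>\<^bsub>M\<^esub> y \<in> rel_inf C" if xy: "x \<in> rel_inf C" "y \<in> rel_inf C" for x y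
  proof -
    obtain f g where "f 0 = x" "\<forall>n. (f n, f (Suc n)) \<in> C" "g 0 = y" "\<forall>n. (g n, g (Suc n)) \<in> C"
      using xy unfolding rel_inf_def by blast
    then show ?thesis unfolding rel_inf_def
      by (auto intro!: rel_add exI[of _ "\<lambda>n. f n \<oplus>\<^bsub>M\<^esub> g n"])
  qed
  show "a \<odot>\<^bsub>M\<^esub> x \<in> rel_inf C" if a: "a \<in> carrier R" and x: "x \<in> rel_inf C" for a x
  proof -
    obtain f where "f 0 = x" "\<forall>n. (f n, f (Suc n)) \<in> C"
      using x unfolding rel_inf_def by blast
    then show ?thesis unfolding rel_inf_def using a
      by (auto intro!: rel_smult exI[of _ "\<lambda>n. a \<odot>\<^bsub>M\<^esub> (f n)"])
  qed
qed

lemma submodule_rel_fin: "submodule (rel_fin M C) R M"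
proof (rule submoduleI)
  show "rel_fin M C \<subseteq> carrier M"
    unfolding rel_fin_def using rel_carrier by blast
  show "\<zero>\<^bsub>M\<^esub> \<in> rel_fin M C"
    unfolding rel_fin_def using rel_zero by (auto intro!: exI[of _ "\<lambda>n. \<zero>\<^bsub>M\<^esub>"])
  show "\<ominus>\<^bsub>M\<^esub> x \<in> rel_fin M C" if x: "x \<in> rel_fin M C" for x
  proof -
    obtain f N where "f 0 = x" "\<forall>n. (f n, f (Suc n)) \<in> C" "\<forall>n\<ge>N. f n = \<zero>\<^bsub>M\<^esub>"
      using x unfolding rel_fin_def by blast
    then show ?thesis unfolding rel_fin_def
      by (auto intro!: rel_uminus exI[of _ "\<lambda>n. \<ominus>\<^bsub>M\<^esub> (f n)"] exI[of _ N])
  qed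
  show "x \<oplus>\<^bsub>M\<^esub> y \<in> rel_fin M C" if xy: "x \<in> rel_fin M C" "y \<in> rel_fin M C" for x y
  proof -
    obtain f g N1 N2 where "f 0 = x" "\<forall>n. (f n, f (Suc n)) \<in> C" "g 0 = y" "\<forall>n. (g n, g (Suc n)) \<in> C"
      "\<forall>n\<ge>N1. f n = \<zero>\<^bsub>M\<^esub>" "\<forall>n\<ge>N2. g n = \<zero>\<^bsub>M\<^esub>"
      using xy unfolding rel_fin_def by blast
    then show ?thesis unfolding rel_fin_def
      by (auto intro!: rel_add exI[of _ "\<lambda>n. f n \<oplus>\<^bsub>M\<^esub> g n"] exI[of _ "max N1 N2"])
  qed
  show "a \<odot>\<^bsub>M\<^esub> x \<in> rel_fin M C" if a: "a \<in> carrier R" and x: "x \<in> rel_fin M C" for a x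
  proof -
    obtain f N where "f 0 = x" "\<forall>n. (f n, f (Suc n)) \<in> C" "\<forall>n\<ge>N. f n = \<zero>\<^bsub>M\<^esub>"
      using x unfolding rel_fin_def by blast
    then show ?thesis unfolding rel_fin_def using a
      by (auto intro!: rel_smult exI[of _ "\<lambda>n. a \<odot>\<^bsub>M\<^esub> (f n)"] exI[of _ N])
  qed
qed

lemma submodule_rel_sharp: "submodule (rel_sharp C) R M"
  unfolding rel_sharp_def
  using submodule_rel_inf linear_relation.submodule_rel_inf[OF linear_relation_converse]
  by (rule submodule_Int)

lemma submodule_rel_flat: "submodule (rel_flat M C) R M"
  unfolding rel_flat_def
  by (intro submodule_set_add submodule_Int submodule_rel_inf submodule_rel_fin
      linear_relation.submodule_rel_inf[OF linear_relation_converse]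
      linear_relation.submodule_rel_fin[OF linear_relation_converse])

lemma rel_sharp_subset_carrier: "rel_sharp C \<subseteq> carrier M"
  using submoduleE(1)[OF submodule_rel_sharp] .

lemma rel_flat_subset_rel_sharp: "rel_flat M C \<subseteq> rel_sharp C"
proof
  fix x assume "x \<in> rel_flat M C"
  then obtain u v where uv: "u \<in> rel_inf C \<inter> rel_fin M (C\<inverse>)" "v \<in> rel_inf (C\<inverse>) \<inter> rel_fin M C"
    "x = u \<oplus>\<^bsub>M\<^esub> v"
    unfolding rel_flat_def mem_set_add_iff by blast
  have "u \<in> rel_sharp C" "v \<in> rel_sharp C"
    using uv rel_fin_subset_rel_inf[of M C] rel_fin_subset_rel_inf[of M "C\<inverse>"]
    unfolding rel_sharp_def by auto
  then show "x \<in> rel_sharp C" using uv(3) submoduleE(5)[OF submodule_rel_sharp] by auto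
qed

lemma rel_flat_converse: "rel_flat M (C\<inverse>) = rel_flat M C"
  unfolding rel_flat_def
  using submoduleE(1)[OF submodule_rel_inf]
    submoduleE(1)[OF linear_relation.submodule_rel_inf[OF linear_relation_converse]]
  by (subst set_add_commute) auto

lemma rel_sharp_Int_fin_sum_subset_rel_flat:
  assumes x: "x \<in> rel_sharp C" "x \<in> rel_fin M (C\<inverse>) <+>\<^bsub>M\<^esub> rel_fin M C"
  shows "x \<in> rel_flat M C"
proof -
  obtain u v where uv: "u \<in> rel_fin M (C\<inverse>)" "v \<in> rel_fin M C" "x = u \<oplus>\<^bsub>M\<^esub> v"
    using x(2) unfolding mem_set_add_iff by blast
  have car: "u \<in> carrier M" "v \<in> carrier M"
    using uv submoduleE(1)[OF submodule_rel_fin]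
      submoduleE(1)[OF linear_relation.submodule_rel_fin[OF linear_relation_converse]] by auto
  have "u = x \<ominus>\<^bsub>M\<^esub> v" using car uv(3) by (simp add: a_minus_def a_assoc r_neg)
  moreover have "x \<ominus>\<^bsub>M\<^esub> v \<in> rel_inf C"
    using x(1) uv(2) rel_fin_subset_rel_inf[of M C] unfolding rel_sharp_def
    by (intro submodule_minus_closed[OF submodule_rel_inf]) auto
  moreover have "v = x \<ominus>\<^bsub>M\<^esub> u" using car uv(3) by (simp add: a_minus_def a_comm[of u v] a_assoc r_neg)
  moreover have "x \<ominus>\<^bsub>M\<^esub> u \<in> rel_inf (C\<inverse>)"
    using x(1) uv(1) rel_fin_subset_rel_inf[of M "C\<inverse>"] unfolding rel_sharp_def
    by (intro submodule_minus_closed[OF linear_relation.submodule_rel_inf[OF linear_relation_converse]])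
      auto
  ultimately have "u \<in> rel_inf C" "v \<in> rel_inf (C\<inverse>)" by simp_all
  then show ?thesis unfolding rel_flat_def mem_set_add_iff using uv by blast
qed

lemma rel_flat_step:
  assumes d: "d \<in> rel_flat M C" and de: "(d, e) \<in> C" and e: "e \<in> rel_sharp C"
  shows "e \<in> rel_flat M C"
proof -
  obtain a b where a: "a \<in> rel_inf C \<inter> rel_fin M (C\<inverse>)" and b: "b \<in> rel_inf (C\<inverse>) \<inter> rel_fin M C"
    and dab: "d = a \<oplus>\<^bsub>M\<^esub> b"
    using d unfolding rel_flat_def mem_set_add_iff by blast
  have "b \<in> rel_fin M C" using b by blast
  then obtain b' where bb': "(b, b') \<in> C" and b': "b' \<in> rel_fin M C" by (rule rel_fin_step)
  have b'_inf: "b' \<in> rel_inf (C\<inverse>)" using bb' b by (auto intro: rel_inf_prepend[of b' b])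
  have car: "a \<in> carrier M" "b \<in> carrier M" "b' \<in> carrier M" "e \<in> carrier M"
    using rel_carrier[OF bb'] rel_carrier[OF de] a submoduleE(1)[OF submodule_rel_inf] by auto
  have "(d \<ominus>\<^bsub>M\<^esub> b, e \<ominus>\<^bsub>M\<^esub> b') \<in> C" using de bb' by (rule rel_minus)
  moreover have "d \<ominus>\<^bsub>M\<^esub> b = a" using dab car by (simp add: a_minus_def a_assoc r_neg)
  ultimately have "(a, e \<ominus>\<^bsub>M\<^esub> b') \<in> C" by simp
  then have "e \<ominus>\<^bsub>M\<^esub> b' \<in> rel_fin M (C\<inverse>)" using a by (auto intro: rel_fin_prepend[of _ a])
  moreover have "e \<ominus>\<^bsub>M\<^esub> b' \<in> rel_inf C"
    using e b' rel_fin_subset_rel_inf[of M C] unfolding rel_sharp_def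
    by (intro submodule_minus_closed[OF submodule_rel_inf]) auto
  moreover have "(e \<ominus>\<^bsub>M\<^esub> b') \<oplus>\<^bsub>M\<^esub> b' = e" using car by (simp add: a_minus_def a_assoc l_neg)
  ultimately show ?thesis
    using b' b'_inf unfolding rel_flat_def mem_set_add_iff
    by (intro bexI[of _ "e \<ominus>\<^bsub>M\<^esub> b'"] bexI[of _ b']) simp_all
qed

lemma rel_flat_step_back:
  assumes "e \<in> rel_flat M C" and "(d, e) \<in> C" and "d \<in> rel_sharp C"
  shows "d \<in> rel_flat M C"
  using linear_relation.rel_flat_step[OF linear_relation_converse, of e d] assms
  by (simp add: rel_flat_converse rel_sharp_converse)

abbreviation sharp_quot :: "('a, 'c set) module"
  where "sharp_quot \<equiv> quot M (rel_sharp C) (rel_flat M C)"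

lemma module_sharp_quot: "module R sharp_quot"
  by (rule quot_module[OF submodule_rel_sharp submodule_rel_flat])

lemma sharp_quot_add_rcos:
  "x \<in> rel_sharp C \<Longrightarrow> y \<in> rel_sharp C \<Longrightarrow>
    (rel_flat M C +>\<^bsub>M\<^esub> x) \<oplus>\<^bsub>sharp_quot\<^esub> (rel_flat M C +>\<^bsub>M\<^esub> y) = rel_flat M C +>\<^bsub>M\<^esub> (x \<oplus>\<^bsub>M\<^esub> y)"
  using quot_add_rcos[OF submodule_rel_flat] rel_sharp_subset_carrier by blast

lemma sharp_quot_smult_rcos:
  "a \<in> carrier R \<Longrightarrow> x \<in> rel_sharp C \<Longrightarrow>
    a \<odot>\<^bsub>sharp_quot\<^esub> (rel_flat M C +>\<^bsub>M\<^esub> x) = rel_flat M C +>\<^bsub>M\<^esub> (a \<odot>\<^bsub>M\<^esub> x)"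
  using quot_smult_rcos[OF submodule_rel_flat] rel_sharp_subset_carrier by blast

text \<open>The description in sharp_T is unique: two admissible images differ by a
  C-successor of an element of C\<flat> that lies in C\<sharp>, hence by an element of C\<flat>
  (rel_flat_step).\<close>

lemma sharp_T_rcos:
  assumes x: "x \<in> rel_sharp C" and xy: "(x, y) \<in> C" and y: "y \<in> rel_sharp C"
  shows "sharp_T M C (rel_flat M C +>\<^bsub>M\<^esub> x) = rel_flat M C +>\<^bsub>M\<^esub> y"
  unfolding sharp_T_def
proof (rule the_equality)
  let ?F = "rel_flat M C" and ?S = "rel_sharp C"
  have car: "x \<in> carrier M" "y \<in> carrier M" using rel_carrier[OF xy] by auto
  have "y \<in> ?F <+>\<^bsub>M\<^esub> C `` {x}"
    using xy car submodule_zero_closed[OF submodule_rel_flat] unfolding mem_set_add_iff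
    by (intro bexI[of _ "\<zero>\<^bsub>M\<^esub>"] bexI[of _ y]) auto
  then show "\<exists>x0\<in>?F +>\<^bsub>M\<^esub> x. \<exists>y0. y0 \<in> ?S \<inter> (?F <+>\<^bsub>M\<^esub> C `` {x0}) \<and> ?F +>\<^bsub>M\<^esub> y = ?F +>\<^bsub>M\<^esub> y0"
    using y submodule_rcos_self[OF submodule_rel_flat car(1)] by blast
  fix V
  assume "\<exists>x0\<in>?F +>\<^bsub>M\<^esub> x. \<exists>y0. y0 \<in> ?S \<inter> (?F <+>\<^bsub>M\<^esub> C `` {x0}) \<and> V = ?F +>\<^bsub>M\<^esub> y0"
  then obtain x0 y0 where x0: "x0 \<in> ?F +>\<^bsub>M\<^esub> x" and y0: "y0 \<in> ?S" "y0 \<in> ?F <+>\<^bsub>M\<^esub> C `` {x0}"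
    and V: "V = ?F +>\<^bsub>M\<^esub> y0" by blast
  obtain h where h: "h \<in> ?F" "x0 = h \<oplus>\<^bsub>M\<^esub> x" using x0 unfolding mem_a_r_coset_iff by blast
  obtain c z where cz: "c \<in> ?F" "(x0, z) \<in> C" "y0 = c \<oplus>\<^bsub>M\<^esub> z"
    using y0(2) unfolding mem_set_add_iff by blast
  have car': "h \<in> carrier M" "c \<in> carrier M" "z \<in> carrier M"
    using h cz submoduleE(1)[OF submodule_rel_flat] rel_carrier[OF cz(2)] by auto
  have "(x0 \<ominus>\<^bsub>M\<^esub> x, z \<ominus>\<^bsub>M\<^esub> y) \<in> C" using cz(2) xy by (rule rel_minus)
  moreover have "x0 \<ominus>\<^bsub>M\<^esub> x = h" using h(2) car car' by (simp add: a_minus_def a_assoc r_neg)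
  ultimately have hz: "(h, z \<ominus>\<^bsub>M\<^esub> y) \<in> C" by simp
  have "z = y0 \<ominus>\<^bsub>M\<^esub> c" using cz(3) car' by (simp add: a_minus_def a_comm[of c z] a_assoc r_neg)
  then have "z \<in> ?S"
    using y0(1) cz(1) rel_flat_subset_rel_sharp submodule_minus_closed[OF submodule_rel_sharp] by auto
  then have "z \<ominus>\<^bsub>M\<^esub> y \<in> ?F"
    using rel_flat_step[OF h(1) hz] y submodule_minus_closed[OF submodule_rel_sharp] by blast
  then have "c \<oplus>\<^bsub>M\<^esub> (z \<ominus>\<^bsub>M\<^esub> y) \<in> ?F" using submoduleE(5)[OF submodule_rel_flat] cz(1) by blast
  moreover have "c \<oplus>\<^bsub>M\<^esub> (z \<ominus>\<^bsub>M\<^esub> y) = y0 \<ominus>\<^bsub>M\<^esub> y" using cz(3) car car' by (simp add: a_minus_def a_assoc)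
  ultimately show "V = ?F +>\<^bsub>M\<^esub> y"
    using V y0(1) car(2) rel_sharp_subset_carrier submodule_rcos_eq_iff[OF submodule_rel_flat] by auto
qed

lemma sharp_T_rcos_step:
  assumes "x \<in> rel_sharp C"
  obtains y where "(x, y) \<in> C" and "y \<in> rel_sharp C"
    and "sharp_T M C (rel_flat M C +>\<^bsub>M\<^esub> x) = rel_flat M C +>\<^bsub>M\<^esub> y"
proof -
  obtain y where "(x, y) \<in> C" "y \<in> rel_sharp C" using assms by (rule rel_sharp_step)
  then show ?thesis using that sharp_T_rcos[OF assms] by blast
qed

lemma sharp_T_mod_hom: "mod_hom R sharp_quot sharp_quot (sharp_T M C)"
  unfolding mod_hom_def
proof (intro conjI ballI)
  let ?F = "rel_flat M C"
  show "sharp_T M C \<in> carrier sharp_quot \<rightarrow> carrier sharp_quot"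
  proof
    fix U assume "U \<in> carrier sharp_quot"
    then obtain x where x: "x \<in> rel_sharp C" "U = ?F +>\<^bsub>M\<^esub> x" by (rule quot_carrierE)
    obtain y where "(x, y) \<in> C" "y \<in> rel_sharp C" "sharp_T M C (?F +>\<^bsub>M\<^esub> x) = ?F +>\<^bsub>M\<^esub> y"
      using x(1) by (rule sharp_T_rcos_step)
    then show "sharp_T M C U \<in> carrier sharp_quot" using x(2) by (simp add: rcos_in_quot_carrier)
  qed
  fix U V assume U: "U \<in> carrier sharp_quot" and V: "V \<in> carrier sharp_quot"
  obtain x1 where x1: "x1 \<in> rel_sharp C" "U = ?F +>\<^bsub>M\<^esub> x1" using U by (rule quot_carrierE)
  obtain x2 where x2: "x2 \<in> rel_sharp C" "V = ?F +>\<^bsub>M\<^esub> x2" using V by (rule quot_carrierE)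
  note x = x1 x2
  obtain y1 where y1: "(x1, y1) \<in> C" "y1 \<in> rel_sharp C" using x(1) by (rule rel_sharp_step)
  obtain y2 where y2: "(x2, y2) \<in> C" "y2 \<in> rel_sharp C" using x(3) by (rule rel_sharp_step)
  have "(x1 \<oplus>\<^bsub>M\<^esub> x2, y1 \<oplus>\<^bsub>M\<^esub> y2) \<in> C" using y1(1) y2(1) by (rule rel_add)
  then show "sharp_T M C (U \<oplus>\<^bsub>sharp_quot\<^esub> V) = sharp_T M C U \<oplus>\<^bsub>sharp_quot\<^esub> sharp_T M C V"
    using x y1 y2 sharp_quot_add_rcos sharp_T_rcos submoduleE(5)[OF submodule_rel_sharp] by simp
next
  let ?F = "rel_flat M C"
  fix a U assume a: "a \<in> carrier R" and U: "U \<in> carrier sharp_quot"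
  obtain x where x: "x \<in> rel_sharp C" "U = ?F +>\<^bsub>M\<^esub> x" using U by (rule quot_carrierE)
  obtain y where y: "(x, y) \<in> C" "y \<in> rel_sharp C" using x(1) by (rule rel_sharp_step)
  have "(a \<odot>\<^bsub>M\<^esub> x, a \<odot>\<^bsub>M\<^esub> y) \<in> C" using a y(1) by (rule rel_smult)
  then show "sharp_T M C (a \<odot>\<^bsub>sharp_quot\<^esub> U) = a \<odot>\<^bsub>sharp_quot\<^esub> sharp_T M C U"
    using a x y sharp_quot_smult_rcos sharp_T_rcos submoduleE(4)[OF submodule_rel_sharp] by simp
qed

lemma sharp_T_bij: "bij_betw (sharp_T M C) (carrier sharp_quot) (carrier sharp_quot)"
proof (rule bij_betw_imageI)
  let ?F = "rel_flat M C"
  show "inj_on (sharp_T M C) (carrier sharp_quot)"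
  proof (rule inj_onI)
    fix U V assume U: "U \<in> carrier sharp_quot" and V: "V \<in> carrier sharp_quot"
      and eq: "sharp_T M C U = sharp_T M C V"
    obtain x1 where x1: "x1 \<in> rel_sharp C" "U = ?F +>\<^bsub>M\<^esub> x1" using U by (rule quot_carrierE)
    obtain x2 where x2: "x2 \<in> rel_sharp C" "V = ?F +>\<^bsub>M\<^esub> x2" using V by (rule quot_carrierE)
    note x = x1 x2
    obtain y1 where y1: "(x1, y1) \<in> C" "y1 \<in> rel_sharp C" using x(1) by (rule rel_sharp_step)
    obtain y2 where y2: "(x2, y2) \<in> C" "y2 \<in> rel_sharp C" using x(3) by (rule rel_sharp_step)
    have "?F +>\<^bsub>M\<^esub> y1 = ?F +>\<^bsub>M\<^esub> y2" using eq x y1 y2 sharp_T_rcos by simp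
    then have "y1 \<ominus>\<^bsub>M\<^esub> y2 \<in> ?F"
      using submodule_rcos_eq_iff[OF submodule_rel_flat] y1(2) y2(2) rel_sharp_subset_carrier by blast
    moreover have "(x1 \<ominus>\<^bsub>M\<^esub> x2, y1 \<ominus>\<^bsub>M\<^esub> y2) \<in> C" using y1(1) y2(1) by (rule rel_minus)
    moreover have "x1 \<ominus>\<^bsub>M\<^esub> x2 \<in> rel_sharp C" using x submodule_minus_closed[OF submodule_rel_sharp] by blast
    ultimately have "x1 \<ominus>\<^bsub>M\<^esub> x2 \<in> ?F" by (rule rel_flat_step_back)
    then show "U = V"
      using submodule_rcos_eq_iff[OF submodule_rel_flat] x rel_sharp_subset_carrier by blast
  qed
  show "sharp_T M C ` carrier sharp_quot = carrier sharp_quot"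
  proof
    show "sharp_T M C ` carrier sharp_quot \<subseteq> carrier sharp_quot"
      using sharp_T_mod_hom unfolding mod_hom_def by blast
    show "carrier sharp_quot \<subseteq> sharp_T M C ` carrier sharp_quot"
    proof
      fix V assume "V \<in> carrier sharp_quot"
      then obtain y where y: "y \<in> rel_sharp C" "V = ?F +>\<^bsub>M\<^esub> y" by (rule quot_carrierE)
      obtain x where x: "(x, y) \<in> C" "x \<in> rel_sharp C" using y(1) by (rule rel_sharp_step_back)
      have "V = sharp_T M C (?F +>\<^bsub>M\<^esub> x)" using sharp_T_rcos[OF x(2) x(1) y(1)] y(2) by simp
      then show "V \<in> sharp_T M C ` carrier sharp_quot" using rcos_in_quot_carrier[OF x(2)] by blast
    qed
  qed
qed

lemma sharp_T_mod_iso: "mod_iso R sharp_quot sharp_quot (sharp_T M C)"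
  unfolding mod_iso_def using sharp_T_mod_hom sharp_T_bij by blast

end

lemma mod_hom_id: "mod_hom R A A (\<lambda>x. x)"
  unfolding mod_hom_def by auto

lemma mod_hom_compose:
  "mod_hom R A B f \<Longrightarrow> mod_hom R B C g \<Longrightarrow> mod_hom R A C (\<lambda>x. g (f x))"
  unfolding mod_hom_def by (auto simp: Pi_def)

locale linear_map = A: plain_module R A + B: plain_module R B
  for R :: "('r, 'x) ring_scheme" (structure)
    and A :: "('r, 'a) module" and B :: "('r, 'b) module" +
  fixes f :: "'a \<Rightarrow> 'b"
  assumes mod_hom: "mod_hom R A B f"
begin

lemma closed: "x \<in> carrier A \<Longrightarrow> f x \<in> carrier B"
  using mod_hom unfolding mod_hom_def by blast

lemma add: "x \<in> carrier A \<Longrightarrow> y \<in> carrier A \<Longrightarrow> f (x \<oplus>\<^bsub>A\<^esub> y) = f x \<oplus>\<^bsub>B\<^esub> f y"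
  using mod_hom unfolding mod_hom_def by blast

lemma smult: "a \<in> carrier R \<Longrightarrow> x \<in> carrier A \<Longrightarrow> f (a \<odot>\<^bsub>A\<^esub> x) = a \<odot>\<^bsub>B\<^esub> f x"
  using mod_hom unfolding mod_hom_def by blast

lemma zero: "f \<zero>\<^bsub>A\<^esub> = \<zero>\<^bsub>B\<^esub>"
  using smult[of \<zero> "\<zero>\<^bsub>A\<^esub>"] closed[of "\<zero>\<^bsub>A\<^esub>"] by simp

lemma uminus: "x \<in> carrier A \<Longrightarrow> f (\<ominus>\<^bsub>A\<^esub> x) = \<ominus>\<^bsub>B\<^esub> f x"
  using smult[of "\<ominus> \<one>" x] closed[of x] by (simp add: A.smult_l_minus B.smult_l_minus)

lemma minus: "x \<in> carrier A \<Longrightarrow> y \<in> carrier A \<Longrightarrow> f (x \<ominus>\<^bsub>A\<^esub> y) = f x \<ominus>\<^bsub>B\<^esub> f y"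
  by (simp add: a_minus_def add uminus)

lemma finsum:
  "finite S \<Longrightarrow> u \<in> S \<rightarrow> carrier A \<Longrightarrow> f (\<Oplus>\<^bsub>A\<^esub>i\<in>S. u i) = (\<Oplus>\<^bsub>B\<^esub>i\<in>S. f (u i))"
proof (induction S rule: finite_induct)
  case empty
  then show ?case by (simp add: zero)
next
  case (insert x S)
  then have "u \<in> S \<rightarrow> carrier A" "u x \<in> carrier A" by auto
  with insert show ?case
    by (simp add: A.finsum_insert B.finsum_insert A.finsum_closed add closed Pi_def)
qed

lemma submodule_image: "submodule (f ` carrier A) R B"
proof (rule B.submoduleI)
  show "f ` carrier A \<subseteq> carrier B" using closed by blast
  show "\<zero>\<^bsub>B\<^esub> \<in> f ` carrier A" using zero by (metis A.zero_closed image_eqI)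
  show "\<ominus>\<^bsub>B\<^esub> y \<in> f ` carrier A" if y: "y \<in> f ` carrier A" for y
  proof -
    obtain x where "x \<in> carrier A" "y = f x" using y by blast
    then show ?thesis using uminus[of x] by (metis A.a_inv_closed image_eqI)
  qed
  show "y \<oplus>\<^bsub>B\<^esub> z \<in> f ` carrier A" if "y \<in> f ` carrier A" "z \<in> f ` carrier A" for y z
    using that by (auto simp flip: add)
  show "a \<odot>\<^bsub>B\<^esub> y \<in> f ` carrier A" if "a \<in> carrier R" "y \<in> f ` carrier A" for a y
    using that by (auto simp flip: smult)
qed

lemma submodule_kernel: "submodule {x \<in> carrier A. f x = \<zero>\<^bsub>B\<^esub>} R A"
proof (rule A.submoduleI)
  show "\<ominus>\<^bsub>A\<^esub> x \<in> {x \<in> carrier A. f x = \<zero>\<^bsub>B\<^esub>}" if "x \<in> {x \<in> carrier A. f x = \<zero>\<^bsub>B\<^esub>}" for x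
    using that uminus by simp
qed (auto simp: zero add smult)

end

lemma linear_mapI: "module R A \<Longrightarrow> module R B \<Longrightarrow> mod_hom R A B f \<Longrightarrow> linear_map R A B f"
  by (simp add: linear_map_def linear_map_axioms_def plain_module_def)

text \<open>The representative is chosen by SOME; the value only matters on cosets of submodules
  contained in the kernel, where it is independent of the choice.\<close>

definition induced_map :: "('a \<Rightarrow> 'b) \<Rightarrow> 'a set \<Rightarrow> 'b"
  where "induced_map f U = f (SOME x. x \<in> U)"

context linear_map
begin

lemma induced_map_rcos:
  assumes K: "submodule K R A" and K_ker: "\<And>k. k \<in> K \<Longrightarrow> f k = \<zero>\<^bsub>B\<^esub>" and x: "x \<in> carrier A"
  shows "induced_map f (K +>\<^bsub>A\<^esub> x) = f x"
proof -
  have "(SOME y. y \<in> K +>\<^bsub>A\<^esub> x) \<in> K +>\<^bsub>A\<^esub> x" using A.submodule_rcos_self[OF K x] by (rule someI)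
  then obtain k where k: "k \<in> K" "(SOME y. y \<in> K +>\<^bsub>A\<^esub> x) = k \<oplus>\<^bsub>A\<^esub> x"
    unfolding mem_a_r_coset_iff by blast
  have "k \<in> carrier A" using k(1) A.submoduleE(1)[OF K] by blast
  then show ?thesis unfolding induced_map_def using k K_ker x add closed by simp
qed

lemma mod_hom_induced_map:
  assumes K: "submodule K R A" and K_ker: "\<And>k. k \<in> K \<Longrightarrow> f k = \<zero>\<^bsub>B\<^esub>"
  shows "mod_hom R (quot A (carrier A) K) B (induced_map f)"
  unfolding mod_hom_def
proof (intro conjI ballI)
  let ?Q = "quot A (carrier A) K"
  have g: "induced_map f (K +>\<^bsub>A\<^esub> x) = f x" if "x \<in> carrier A" for x
    by (rule induced_map_rcos[OF K K_ker that])
  show "induced_map f \<in> carrier ?Q \<rightarrow> carrier B"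
  proof
    fix U assume "U \<in> carrier ?Q"
    then obtain x where "x \<in> carrier A" "U = K +>\<^bsub>A\<^esub> x" by (rule quot_carrierE)
    then show "induced_map f U \<in> carrier B" using g closed by simp
  qed
  fix U V assume U: "U \<in> carrier ?Q" and V: "V \<in> carrier ?Q"
  obtain x where x: "x \<in> carrier A" "U = K +>\<^bsub>A\<^esub> x" using U by (rule quot_carrierE)
  obtain y where y: "y \<in> carrier A" "V = K +>\<^bsub>A\<^esub> y" using V by (rule quot_carrierE)
  show "induced_map f (U \<oplus>\<^bsub>?Q\<^esub> V) = induced_map f U \<oplus>\<^bsub>B\<^esub> induced_map f V"
    using x y A.quot_add_rcos[OF K] g add by simp
next
  fix a U assume a: "a \<in> carrier R" and U: "U \<in> carrier (quot A (carrier A) K)"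
  obtain x where x: "x \<in> carrier A" "U = K +>\<^bsub>A\<^esub> x" using U by (rule quot_carrierE)
  show "induced_map f (a \<odot>\<^bsub>quot A (carrier A) K\<^esub> U) = a \<odot>\<^bsub>B\<^esub> induced_map f U"
    using a x A.quot_smult_rcos[OF K] induced_map_rcos[OF K K_ker] smult by simp
qed

lemma mod_iso_induced_map:
  assumes onto: "f ` carrier A = carrier B"
  shows "mod_iso R (quot A (carrier A) {x \<in> carrier A. f x = \<zero>\<^bsub>B\<^esub>}) B (induced_map f)"
proof -
  let ?K = "{x \<in> carrier A. f x = \<zero>\<^bsub>B\<^esub>}" and ?g = "induced_map f"
  let ?Q = "quot A (carrier A) ?K"
  have K: "submodule ?K R A" by (rule submodule_kernel)
  have g: "?g (?K +>\<^bsub>A\<^esub> x) = f x" if "x \<in> carrier A" for x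
    using induced_map_rcos[OF K _ that] by blast
  have hom: "mod_hom R ?Q B ?g" by (rule mod_hom_induced_map[OF K]) blast
  have "inj_on ?g (carrier ?Q)"
  proof (rule inj_onI)
    fix U V assume U: "U \<in> carrier ?Q" and V: "V \<in> carrier ?Q" and eq: "?g U = ?g V"
    obtain x where x: "x \<in> carrier A" "U = ?K +>\<^bsub>A\<^esub> x" using U by (rule quot_carrierE)
    obtain y where y: "y \<in> carrier A" "V = ?K +>\<^bsub>A\<^esub> y" using V by (rule quot_carrierE)
    have "f (x \<ominus>\<^bsub>A\<^esub> y) = \<zero>\<^bsub>B\<^esub>" using eq x y g minus closed by (simp add: B.r_neg a_minus_def)
    then show "U = V" using x y A.submodule_rcos_eq_iff[OF K] by simp
  qed
  moreover have "?g ` carrier ?Q = carrier B"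
  proof
    show "?g ` carrier ?Q \<subseteq> carrier B" using hom unfolding mod_hom_def by blast
    show "carrier B \<subseteq> ?g ` carrier ?Q"
    proof
      fix b assume "b \<in> carrier B"
      then obtain x where "x \<in> carrier A" "b = f x" using onto by blast
      then have "b = ?g (?K +>\<^bsub>A\<^esub> x)" "?K +>\<^bsub>A\<^esub> x \<in> carrier ?Q"
        using g rcos_in_quot_carrier by simp_all
      then show "b \<in> ?g ` carrier ?Q" by blast
    qed
  qed
  ultimately show ?thesis using hom unfolding mod_iso_def bij_betw_def by blast
qed

end

lemma (in plain_module) quot_map_rcos:
  assumes K: "submodule K R M" and t: "linear_map R M M t" and tK: "t ` K \<subseteq> K"
    and x: "x \<in> carrier M"
  shows "quot_map M K t (K +>\<^bsub>M\<^esub> x) = K +>\<^bsub>M\<^esub> t x"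
proof -
  interpret t: linear_map R M M t by (rule t)
  have "z \<in> K <+>\<^bsub>M\<^esub> t ` (K +>\<^bsub>M\<^esub> x) \<longleftrightarrow> z \<in> K +>\<^bsub>M\<^esub> t x" for z
  proof
    assume "z \<in> K <+>\<^bsub>M\<^esub> t ` (K +>\<^bsub>M\<^esub> x)"
    then obtain k l where kl: "k \<in> K" "l \<in> K" "z = k \<oplus>\<^bsub>M\<^esub> t (l \<oplus>\<^bsub>M\<^esub> x)"
      unfolding mem_set_add_iff a_r_coset_def' by blast
    have "k \<in> carrier M" "l \<in> carrier M" using kl submoduleE(1)[OF K] by auto
    then have "z = (k \<oplus>\<^bsub>M\<^esub> t l) \<oplus>\<^bsub>M\<^esub> t x" using kl(3) x by (simp add: t.add t.closed a_assoc)
    moreover have "k \<oplus>\<^bsub>M\<^esub> t l \<in> K" using kl tK submoduleE(5)[OF K] by blast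
    ultimately show "z \<in> K +>\<^bsub>M\<^esub> t x" unfolding mem_a_r_coset_iff by blast
  next
    assume "z \<in> K +>\<^bsub>M\<^esub> t x"
    then obtain k where "k \<in> K" "z = k \<oplus>\<^bsub>M\<^esub> t x" unfolding mem_a_r_coset_iff by blast
    then show "z \<in> K <+>\<^bsub>M\<^esub> t ` (K +>\<^bsub>M\<^esub> x)"
      using submodule_rcos_self[OF K x] unfolding mem_set_add_iff by blast
  qed
  then show ?thesis unfolding quot_map_def by blast
qed

section \<open>Projective modules\<close>

definition free_section :: "('r, 'x) ring_scheme \<Rightarrow> ('r, 'p) module \<Rightarrow> ('p \<Rightarrow> 'p \<Rightarrow> 'r) \<Rightarrow> bool"
  where "free_section R P s \<longleftrightarrow>
    (\<forall>p\<in>carrier P. s p \<in> free_carrier R P \<and> free_eps R P (s p) = p) \<and>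
    (\<forall>p\<in>carrier P. \<forall>q\<in>carrier P. s (p \<oplus>\<^bsub>P\<^esub> q) = (\<lambda>z. s p z \<oplus>\<^bsub>R\<^esub> s q z)) \<and>
    (\<forall>a\<in>carrier R. \<forall>p\<in>carrier P. s (a \<odot>\<^bsub>P\<^esub> p) = (\<lambda>z. a \<otimes>\<^bsub>R\<^esub> s p z))"

lemma projectiveE:
  assumes "projective R P"
  obtains s where "module R P" and "free_section R P s"
  using assms unfolding projective_def free_section_def by blast

context
  fixes R :: "('r, 'x) ring_scheme" and P :: "('r, 'p) module" and s
  assumes s: "free_section R P s"
begin

lemma free_section_free_carrier: "p \<in> carrier P \<Longrightarrow> s p \<in> free_carrier R P"
  using s unfolding free_section_def by blast

lemma free_section_eps: "p \<in> carrier P \<Longrightarrow> free_eps R P (s p) = p"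
  using s unfolding free_section_def by blast

lemma free_section_add:
  "p \<in> carrier P \<Longrightarrow> q \<in> carrier P \<Longrightarrow> s (p \<oplus>\<^bsub>P\<^esub> q) = (\<lambda>z. s p z \<oplus>\<^bsub>R\<^esub> s q z)"
  using s unfolding free_section_def by blast

lemma free_section_smult:
  "a \<in> carrier R \<Longrightarrow> p \<in> carrier P \<Longrightarrow> s (a \<odot>\<^bsub>P\<^esub> p) = (\<lambda>z. a \<otimes>\<^bsub>R\<^esub> s p z)"
  using s unfolding free_section_def by blast

lemma free_section_coeff_closed: "p \<in> carrier P \<Longrightarrow> s p q \<in> carrier R"
  using free_section_free_carrier unfolding free_carrier_def by blast

end

lemma free_carrier_finite_support:
  "\<phi> \<in> free_carrier R P \<Longrightarrow> finite {q \<in> carrier P. \<phi> q \<noteq> \<zero>\<^bsub>R\<^esub>}"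
  unfolding free_carrier_def by (auto elim: rev_finite_subset)

context cring
begin

lemma free_carrier_add:
  assumes "\<phi> \<in> free_carrier R P" and "\<psi> \<in> free_carrier R P"
  shows "(\<lambda>q. \<phi> q \<oplus> \<psi> q) \<in> free_carrier R P"
proof -
  have "{q. \<phi> q \<oplus> \<psi> q \<noteq> \<zero>} \<subseteq> {q. \<phi> q \<noteq> \<zero>} \<union> {q. \<psi> q \<noteq> \<zero>}" by auto
  then show ?thesis using assms unfolding free_carrier_def by (auto elim: finite_subset)
qed

lemma free_carrier_smult:
  assumes "a \<in> carrier R" and "\<phi> \<in> free_carrier R P"
  shows "(\<lambda>q. a \<otimes> \<phi> q) \<in> free_carrier R P"
proof -
  have "{q. a \<otimes> \<phi> q \<noteq> \<zero>} \<subseteq> {q. \<phi> q \<noteq> \<zero>}" using assms(1) by auto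
  then show ?thesis using assms unfolding free_carrier_def by (auto elim: finite_subset)
qed

end

definition free_ext :: "('r, 'x) ring_scheme \<Rightarrow> ('r, 'p) module \<Rightarrow> ('r, 'a) module \<Rightarrow> ('p \<Rightarrow> 'a) \<Rightarrow> ('p \<Rightarrow> 'r) \<Rightarrow> 'a"
  where "free_ext R P A e \<phi> = (\<Oplus>\<^bsub>A\<^esub>q\<in>{q \<in> carrier P. \<phi> q \<noteq> \<zero>\<^bsub>R\<^esub>}. \<phi> q \<odot>\<^bsub>A\<^esub> e q)"

lemma free_eps_eq_free_ext: "free_eps R P \<phi> = free_ext R P P (\<lambda>q. q) \<phi>"
  unfolding free_eps_def free_ext_def ..

context plain_module
begin

lemma free_ext_eq_finsum:
  assumes \<phi>: "\<phi> \<in> free_carrier R P" and e: "e \<in> carrier P \<rightarrow> carrier M"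
    and Y: "finite Y" "{q \<in> carrier P. \<phi> q \<noteq> \<zero>} \<subseteq> Y" "Y \<subseteq> carrier P"
  shows "free_ext R P M e \<phi> = (\<Oplus>\<^bsub>M\<^esub>q\<in>Y. \<phi> q \<odot>\<^bsub>M\<^esub> e q)"
  unfolding free_ext_def
proof (rule add.finprod_mono_neutral_cong_left)
  show "\<phi> q \<odot>\<^bsub>M\<^esub> e q = \<zero>\<^bsub>M\<^esub>" if "q \<in> Y - {q \<in> carrier P. \<phi> q \<noteq> \<zero>}" for q
    using that Y(3) e by (auto simp: Pi_iff)
  show "(\<lambda>q. \<phi> q \<odot>\<^bsub>M\<^esub> e q) \<in> Y \<rightarrow> carrier M"
    using Y(3) e \<phi> unfolding free_carrier_def by auto
qed (use Y in auto)

lemma free_ext_closed: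
  "\<phi> \<in> free_carrier R P \<Longrightarrow> e \<in> carrier P \<rightarrow> carrier M \<Longrightarrow> free_ext R P M e \<phi> \<in> carrier M"
  unfolding free_ext_def free_carrier_def by (intro finsum_closed) auto

lemma free_ext_add:
  assumes \<phi>: "\<phi> \<in> free_carrier R P" and \<psi>: "\<psi> \<in> free_carrier R P" and e: "e \<in> carrier P \<rightarrow> carrier M"
  shows "free_ext R P M e (\<lambda>q. \<phi> q \<oplus> \<psi> q) = free_ext R P M e \<phi> \<oplus>\<^bsub>M\<^esub> free_ext R P M e \<psi>"
proof -
  have sum: "(\<lambda>q. \<phi> q \<oplus> \<psi> q) \<in> free_carrier R P" by (rule free_carrier_add[OF \<phi> \<psi>])
  let ?Y = "{q \<in> carrier P. \<phi> q \<noteq> \<zero>} \<union> {q \<in> carrier P. \<psi> q \<noteq> \<zero>}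
    \<union> {q \<in> carrier P. \<phi> q \<oplus> \<psi> q \<noteq> \<zero>}"
  have Y: "finite ?Y" "?Y \<subseteq> carrier P"
    using free_carrier_finite_support[OF \<phi>] free_carrier_finite_support[OF \<psi>]
      free_carrier_finite_support[OF sum] by auto
  have coeff: "\<phi> q \<in> carrier R" "\<psi> q \<in> carrier R" for q
    using \<phi> \<psi> unfolding free_carrier_def by auto
  have "free_ext R P M e (\<lambda>q. \<phi> q \<oplus> \<psi> q) = (\<Oplus>\<^bsub>M\<^esub>q\<in>?Y. (\<phi> q \<oplus> \<psi> q) \<odot>\<^bsub>M\<^esub> e q)"
    by (rule free_ext_eq_finsum[OF sum e Y(1) _ Y(2)]) blast
  also have "\<dots> = (\<Oplus>\<^bsub>M\<^esub>q\<in>?Y. \<phi> q \<odot>\<^bsub>M\<^esub> e q \<oplus>\<^bsub>M\<^esub> \<psi> q \<odot>\<^bsub>M\<^esub> e q)"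
    using Y(2) e coeff by (intro finsum_cong') (auto simp: smult_l_distr Pi_iff)
  also have "\<dots> = (\<Oplus>\<^bsub>M\<^esub>q\<in>?Y. \<phi> q \<odot>\<^bsub>M\<^esub> e q) \<oplus>\<^bsub>M\<^esub> (\<Oplus>\<^bsub>M\<^esub>q\<in>?Y. \<psi> q \<odot>\<^bsub>M\<^esub> e q)"
    using Y(2) e coeff by (intro finsum_addf) auto
  also have "(\<Oplus>\<^bsub>M\<^esub>q\<in>?Y. \<phi> q \<odot>\<^bsub>M\<^esub> e q) = free_ext R P M e \<phi>"
    by (rule free_ext_eq_finsum[OF \<phi> e Y(1) _ Y(2), symmetric]) blast
  also have "(\<Oplus>\<^bsub>M\<^esub>q\<in>?Y. \<psi> q \<odot>\<^bsub>M\<^esub> e q) = free_ext R P M e \<psi>"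
    by (rule free_ext_eq_finsum[OF \<psi> e Y(1) _ Y(2), symmetric]) blast
  finally show ?thesis .
qed

lemma free_ext_smult:
  assumes a: "a \<in> carrier R" and \<phi>: "\<phi> \<in> free_carrier R P" and e: "e \<in> carrier P \<rightarrow> carrier M"
  shows "free_ext R P M e (\<lambda>q. a \<otimes> \<phi> q) = a \<odot>\<^bsub>M\<^esub> free_ext R P M e \<phi>"
proof -
  have a\<phi>: "(\<lambda>q. a \<otimes> \<phi> q) \<in> free_carrier R P" by (rule free_carrier_smult[OF a \<phi>])
  let ?Y = "{q \<in> carrier P. \<phi> q \<noteq> \<zero>} \<union> {q \<in> carrier P. a \<otimes> \<phi> q \<noteq> \<zero>}"
  have Y: "finite ?Y" "?Y \<subseteq> carrier P"
    using free_carrier_finite_support[OF \<phi>] free_carrier_finite_support[OF a\<phi>] by auto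
  have coeff: "\<phi> q \<in> carrier R" for q
    using \<phi> unfolding free_carrier_def by auto
  have "free_ext R P M e (\<lambda>q. a \<otimes> \<phi> q) = (\<Oplus>\<^bsub>M\<^esub>q\<in>?Y. (a \<otimes> \<phi> q) \<odot>\<^bsub>M\<^esub> e q)"
    by (rule free_ext_eq_finsum[OF a\<phi> e Y(1) _ Y(2)]) blast
  also have "\<dots> = (\<Oplus>\<^bsub>M\<^esub>q\<in>?Y. a \<odot>\<^bsub>M\<^esub> (\<phi> q \<odot>\<^bsub>M\<^esub> e q))"
    using Y(2) e coeff a by (intro finsum_cong') (auto simp: smult_assoc1 Pi_iff)
  also have "\<dots> = a \<odot>\<^bsub>M\<^esub> (\<Oplus>\<^bsub>M\<^esub>q\<in>?Y. \<phi> q \<odot>\<^bsub>M\<^esub> e q)"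
    using Y e coeff a by (intro finsum_smult_ldistr[symmetric]) auto
  also have "(\<Oplus>\<^bsub>M\<^esub>q\<in>?Y. \<phi> q \<odot>\<^bsub>M\<^esub> e q) = free_ext R P M e \<phi>"
    by (rule free_ext_eq_finsum[OF \<phi> e Y(1) _ Y(2), symmetric]) blast
  finally show ?thesis .
qed

lemma free_ext_cong:
  assumes "\<phi> \<in> free_carrier R P" and "e \<in> carrier P \<rightarrow> carrier M"
    and "\<And>q. q \<in> carrier P \<Longrightarrow> e' q = e q"
  shows "free_ext R P M e' \<phi> = free_ext R P M e \<phi>"
  unfolding free_ext_def using assms by (intro finsum_cong') (auto simp: Pi_iff free_carrier_def)

end

lemma (in linear_map) map_free_ext:
  assumes \<phi>: "\<phi> \<in> free_carrier R P" and e: "e \<in> carrier P \<rightarrow> carrier A"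
  shows "f (free_ext R P A e \<phi>) = free_ext R P B (\<lambda>q. f (e q)) \<phi>"
proof -
  have coeff: "\<phi> q \<in> carrier R" for q
    using \<phi> unfolding free_carrier_def by auto
  show ?thesis
    unfolding free_ext_def
    using free_carrier_finite_support[OF \<phi>] e coeff
    by (subst finsum) (auto intro!: B.finsum_cong' simp: smult closed Pi_iff)
qed

lemma projective_lift:
  assumes P: "projective R P" and h: "linear_map R A B h" and g: "mod_hom R P B g"
    and onto: "\<forall>p\<in>carrier P. \<exists>a\<in>carrier A. h a = g p"
  obtains f where "mod_hom R P A f" and "\<forall>p\<in>carrier P. h (f p) = g p"
proof -
  interpret h: linear_map R A B h by (rule h)
  obtain s where MP: "module R P" and s: "free_section R P s" using P by (rule projectiveE)
  interpret g: linear_map R P B g using linear_mapI[OF MP h.B.module_axioms g] .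
  define e where "e q = (SOME a. a \<in> carrier A \<and> h a = g q)" for q
  have e: "e q \<in> carrier A \<and> h (e q) = g q" if "q \<in> carrier P" for q
    unfolding e_def by (rule someI_ex) (use onto that in blast)
  then have e_Pi: "e \<in> carrier P \<rightarrow> carrier A" by blast
  define f where "f p = free_ext R P A e (s p)" for p
  have "mod_hom R P A f"
    unfolding mod_hom_def f_def
    using e_Pi free_section_free_carrier[OF s] free_section_add[OF s] free_section_smult[OF s]
    by (simp add: h.A.free_ext_closed h.A.free_ext_add h.A.free_ext_smult)
  moreover have "h (f p) = g p" if p: "p \<in> carrier P" for p
  proof -
    have s_p: "s p \<in> free_carrier R P" using free_section_free_carrier[OF s p] .
    have "h (f p) = free_ext R P B (\<lambda>q. h (e q)) (s p)"
      unfolding f_def using s_p e_Pi by (rule h.map_free_ext)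
    also have "\<dots> = free_ext R P B g (s p)"
      using e g.closed s_p by (intro h.B.free_ext_cong) auto
    also have "\<dots> = g (free_ext R P P (\<lambda>q. q) (s p))"
      using s_p by (intro g.map_free_ext[symmetric]) auto
    also have "\<dots> = g p"
      using free_section_eps[OF s p] by (simp add: free_eps_eq_free_ext)
    finally show ?thesis .
  qed
  ultimately show ?thesis using that by blast
qed

section \<open>Projective covers\<close>

lemma (in cring) maximalideal_congruent_multiple:
  assumes J: "maximalideal J R" and a: "a \<in> carrier R" "a \<notin> J" and r: "r \<in> carrier R"
  obtains c where "c \<in> carrier R" and "r \<ominus> c \<otimes> a \<in> J"
proof -
  interpret maximalideal J R by fact
  let ?J' = "J <+>\<^bsub>R\<^esub> PIdl a"
  have J': "ideal ?J' R" by (intro add_ideals is_ideal cgenideal_ideal a)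
  have J'_carrier: "?J' \<subseteq> carrier R" using J' by (simp add: ideal.axioms(1) additive_subgroup.a_subset)
  have JJ': "J \<subseteq> ?J'"
  proof
    fix i assume i: "i \<in> J"
    have "i = i \<oplus> \<zero> \<otimes> a" using i a by simp
    moreover have "\<zero> \<otimes> a \<in> PIdl a" unfolding cgenideal_def by blast
    ultimately show "i \<in> ?J'" using i unfolding mem_set_add_iff by blast
  qed
  have "a = \<zero> \<oplus> \<one> \<otimes> a" using a by simp
  moreover have "\<one> \<otimes> a \<in> PIdl a" unfolding cgenideal_def by blast
  ultimately have "a \<in> ?J'" using zero_closed unfolding mem_set_add_iff by blast
  then have "?J' \<noteq> J" using a(2) by blast
  then have "?J' = carrier R" using I_maximal[OF J' JJ' J'_carrier] by blast
  then have "r \<in> ?J'" using r by simp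
  then obtain i c where ic: "i \<in> J" "c \<in> carrier R" "r = i \<oplus> c \<otimes> a"
    unfolding mem_set_add_iff cgenideal_def by blast
  then have "r \<ominus> c \<otimes> a = i" using a by (simp add: a_minus_def a_assoc r_neg)
  then show ?thesis using that ic by blast
qed

lemma (in module) submodule_vimage_ideal:
  assumes closed: "\<And>p. p \<in> carrier M \<Longrightarrow> h p \<in> carrier R"
    and add: "\<And>p q. p \<in> carrier M \<Longrightarrow> q \<in> carrier M \<Longrightarrow> h (p \<oplus>\<^bsub>M\<^esub> q) = h p \<oplus> h q"
    and smult: "\<And>a p. a \<in> carrier R \<Longrightarrow> p \<in> carrier M \<Longrightarrow> h (a \<odot>\<^bsub>M\<^esub> p) = a \<otimes> h p"
    and J: "ideal J R"
  shows "submodule {p \<in> carrier M. h p \<in> J} R M"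
proof (rule submoduleI)
  interpret ideal J R by (rule J)
  show "\<zero>\<^bsub>M\<^esub> \<in> {p \<in> carrier M. h p \<in> J}"
    using smult[of \<zero> "\<zero>\<^bsub>M\<^esub>"] closed[of "\<zero>\<^bsub>M\<^esub>"] by simp
  show "\<ominus>\<^bsub>M\<^esub> p \<in> {p \<in> carrier M. h p \<in> J}" if "p \<in> {p \<in> carrier M. h p \<in> J}" for p
    using that smult[of "\<ominus> \<one>" p] by (simp add: smult_l_minus I_l_closed)
  show "p \<oplus>\<^bsub>M\<^esub> q \<in> {p \<in> carrier M. h p \<in> J}"
    if "p \<in> {p \<in> carrier M. h p \<in> J}" "q \<in> {p \<in> carrier M. h p \<in> J}" for p q
    using that add by simp
  show "a \<odot>\<^bsub>M\<^esub> p \<in> {p \<in> carrier M. h p \<in> J}"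
    if "a \<in> carrier R" "p \<in> {p \<in> carrier M. h p \<in> J}" for a p
    using that smult by (simp add: I_l_closed)
qed auto

lemma proj_cover_linear_map: "module R N \<Longrightarrow> proj_cover R N P \<pi> \<Longrightarrow> linear_map R P N \<pi>"
  unfolding proj_cover_def projective_def by (auto intro: linear_mapI)

lemma proj_cover_submodule_eq_carrier:
  assumes N: "module R N" and pc: "proj_cover R N P \<pi>" and L: "submodule L R P"
    and onto: "\<And>p. p \<in> carrier P \<Longrightarrow> \<exists>l\<in>L. \<pi> l = \<pi> p"
  shows "L = carrier P"
proof -
  interpret \<pi>: linear_map R P N \<pi> using proj_cover_linear_map[OF N pc] .
  let ?K = "{x \<in> carrier P. \<pi> x = \<zero>\<^bsub>N\<^esub>}"
  have "?K <+>\<^bsub>P\<^esub> L = carrier P"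
  proof
    show "?K <+>\<^bsub>P\<^esub> L \<subseteq> carrier P"
      using \<pi>.A.submoduleE(1)[OF L] by (intro \<pi>.A.set_add_closed) auto
    show "carrier P \<subseteq> ?K <+>\<^bsub>P\<^esub> L"
    proof
      fix p assume p: "p \<in> carrier P"
      obtain l where l: "l \<in> L" "\<pi> l = \<pi> p" using onto[OF p] by blast
      have lc: "l \<in> carrier P" using l(1) \<pi>.A.submoduleE(1)[OF L] by blast
      have "p \<ominus>\<^bsub>P\<^esub> l \<in> ?K" using p lc l(2) \<pi>.minus \<pi>.closed by (simp add: \<pi>.B.r_neg a_minus_def)
      moreover have "(p \<ominus>\<^bsub>P\<^esub> l) \<oplus>\<^bsub>P\<^esub> l = p"
        using p lc by (simp add: a_minus_def \<pi>.A.a_assoc \<pi>.A.l_neg)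
      ultimately show "p \<in> ?K <+>\<^bsub>P\<^esub> L" using l(1) unfolding mem_set_add_iff by metis
    qed
  qed
  then show ?thesis using pc L unfolding proj_cover_def by blast
qed

lemma proj_cover_kernel_coeff_mem_maximalideal:
  assumes N: "module R N" and pc: "proj_cover R N P \<pi>" and s: "free_section R P s"
    and x: "x \<in> carrier P" "\<pi> x = \<zero>\<^bsub>N\<^esub>" and J: "maximalideal J R" and q0: "q0 \<in> carrier P"
  shows "s x q0 \<in> J"
proof (rule ccontr)
  interpret \<pi>: linear_map R P N \<pi> using proj_cover_linear_map[OF N pc] .
  note coeff = free_section_coeff_closed[OF s]
  assume x_q0: "s x q0 \<notin> J"
  let ?L = "{p \<in> carrier P. s p q0 \<in> J}"
  have "submodule ?L R P"
    using coeff free_section_add[OF s] free_section_smult[OF s] maximalideal.axioms(1)[OF J]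
    by (intro \<pi>.A.submodule_vimage_ideal) auto
  moreover have "\<exists>l\<in>?L. \<pi> l = \<pi> p" if p: "p \<in> carrier P" for p
  proof -
    obtain c where c: "c \<in> carrier R" "s p q0 \<ominus>\<^bsub>R\<^esub> c \<otimes>\<^bsub>R\<^esub> s x q0 \<in> J"
      using \<pi>.A.maximalideal_congruent_multiple[OF J coeff[OF x(1)] x_q0 coeff[OF p]] .
    have cx: "c \<odot>\<^bsub>P\<^esub> x \<in> carrier P" using c x by simp
    have "p \<ominus>\<^bsub>P\<^esub> c \<odot>\<^bsub>P\<^esub> x = p \<oplus>\<^bsub>P\<^esub> (\<ominus>\<^bsub>R\<^esub> c) \<odot>\<^bsub>P\<^esub> x"
      using c x by (simp add: a_minus_def \<pi>.A.smult_l_minus)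
    then have "s (p \<ominus>\<^bsub>P\<^esub> c \<odot>\<^bsub>P\<^esub> x) q0 = s p q0 \<oplus>\<^bsub>R\<^esub> (\<ominus>\<^bsub>R\<^esub> c) \<otimes>\<^bsub>R\<^esub> s x q0"
      using free_section_add[OF s] free_section_smult[OF s] p x c by simp
    also have "\<dots> = s p q0 \<ominus>\<^bsub>R\<^esub> c \<otimes>\<^bsub>R\<^esub> s x q0"
      using coeff p x c by (simp add: a_minus_def \<pi>.A.R.l_minus)
    finally have "p \<ominus>\<^bsub>P\<^esub> c \<odot>\<^bsub>P\<^esub> x \<in> ?L" using c(2) p cx by simp
    moreover have "\<pi> (p \<ominus>\<^bsub>P\<^esub> c \<odot>\<^bsub>P\<^esub> x) = \<pi> p"
      using p cx c x \<pi>.minus \<pi>.smult \<pi>.closed by (simp add: a_minus_def)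
    ultimately show ?thesis by blast
  qed
  ultimately have "?L = carrier P" by (rule proj_cover_submodule_eq_carrier[OF N pc])
  then show False using x(1) x_q0 by blast
qed

lemma proj_cover_kernel_subset_jacobson:
  assumes N: "module R N" and pc: "proj_cover R N P \<pi>"
  shows "{x \<in> carrier P. \<pi> x = \<zero>\<^bsub>N\<^esub>} \<subseteq> ideal_mod (jacobson R) P"
proof
  obtain s where P: "module R P" and s: "free_section R P s"
    using pc unfolding proj_cover_def by (auto elim: projectiveE)
  interpret P: plain_module R P using P by (simp add: plain_module_def)
  have J: "jacobson R \<subseteq> carrier R" unfolding jacobson_def by blast
  fix x assume "x \<in> {x \<in> carrier P. \<pi> x = \<zero>\<^bsub>N\<^esub>}"
  then have x: "x \<in> carrier P" "\<pi> x = \<zero>\<^bsub>N\<^esub>" by auto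
  have "s x q \<in> jacobson R" if "q \<in> carrier P" for q
    using proj_cover_kernel_coeff_mem_maximalideal[OF N pc s x _ that]
      free_section_coeff_closed[OF s x(1)] unfolding jacobson_def by blast
  then have "(\<Oplus>\<^bsub>P\<^esub>q\<in>{q \<in> carrier P. s x q \<noteq> \<zero>\<^bsub>R\<^esub>}. s x q \<odot>\<^bsub>P\<^esub> q) \<in> ideal_mod (jacobson R) P"
    using free_carrier_finite_support[OF free_section_free_carrier[OF s x(1)]]
    by (intro P.ideal_mod_finsum[OF J]) auto
  then show "x \<in> ideal_mod (jacobson R) P" using free_section_eps[OF s x(1)] unfolding free_eps_def by simp
qed

lemma proj_cover_kernel_eq:
  assumes N: "module R N" and pc: "proj_cover R N P \<pi>"
    and ann: "\<And>a U. a \<in> jacobson R \<Longrightarrow> U \<in> carrier N \<Longrightarrow> a \<odot>\<^bsub>N\<^esub> U = \<zero>\<^bsub>N\<^esub>"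
  shows "{x \<in> carrier P. \<pi> x = \<zero>\<^bsub>N\<^esub>} = ideal_mod (jacobson R) P"
proof
  show "{x \<in> carrier P. \<pi> x = \<zero>\<^bsub>N\<^esub>} \<subseteq> ideal_mod (jacobson R) P"
    by (rule proj_cover_kernel_subset_jacobson[OF N pc])
  interpret \<pi>: linear_map R P N \<pi> using proj_cover_linear_map[OF N pc] .
  show "ideal_mod (jacobson R) P \<subseteq> {x \<in> carrier P. \<pi> x = \<zero>\<^bsub>N\<^esub>}"
  proof
    fix x assume "x \<in> ideal_mod (jacobson R) P"
    then show "x \<in> {x \<in> carrier P. \<pi> x = \<zero>\<^bsub>N\<^esub>}"
    proof induction
      case zero
      then show ?case by (simp add: \<pi>.zero)
    next
      case (step z a m)
      then have "a \<in> carrier R" unfolding jacobson_def by blast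
      then show ?case using step ann \<pi>.add \<pi>.smult \<pi>.closed by simp
    qed
  qed
qed

lemma proj_cover_endomorphism_surj:
  assumes N: "module R N" and pc: "proj_cover R N P \<pi>" and t: "mod_hom R P P t"
    and onto: "\<And>p. p \<in> carrier P \<Longrightarrow> \<exists>q\<in>carrier P. \<pi> (t q) = \<pi> p"
  shows "t ` carrier P = carrier P"
proof (rule proj_cover_submodule_eq_carrier[OF N pc])
  interpret \<pi>: linear_map R P N \<pi> using proj_cover_linear_map[OF N pc] .
  show "submodule (t ` carrier P) R P"
    by (rule linear_map.submodule_image[OF linear_mapI[OF \<pi>.A.module_axioms \<pi>.A.module_axioms t]])
  show "\<exists>l\<in>t ` carrier P. \<pi> l = \<pi> p" if "p \<in> carrier P" for p
    using onto[OF that] by blast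
qed

lemma proj_cover_lift:
  assumes N: "module R N" and pc: "proj_cover R N P \<pi>" and T: "mod_hom R N N T"
  obtains t where "mod_hom R P P t" and "\<forall>p\<in>carrier P. \<pi> (t p) = T (\<pi> p)"
proof -
  interpret \<pi>: linear_map R P N \<pi> using proj_cover_linear_map[OF N pc] .
  have PP: "projective R P" and \<pi>_onto: "\<pi> ` carrier P = carrier N"
    using pc unfolding proj_cover_def by auto
  have "\<forall>p\<in>carrier P. \<exists>q\<in>carrier P. \<pi> q = T (\<pi> p)"
  proof
    fix p assume "p \<in> carrier P"
    then have "T (\<pi> p) \<in> \<pi> ` carrier P" using \<pi>_onto T \<pi>.closed unfolding mod_hom_def by auto
    then show "\<exists>q\<in>carrier P. \<pi> q = T (\<pi> p)" by (metis imageE)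
  qed
  then show ?thesis
    using that projective_lift[OF PP \<pi>.linear_map_axioms mod_hom_compose[OF \<pi>.mod_hom T]] by blast
qed

lemma proj_cover_lift_mod_iso:
  assumes N: "module R N" and pc: "proj_cover R N P \<pi>" and T: "mod_iso R N N T"
    and t: "mod_hom R P P t" and \<pi>t: "\<And>p. p \<in> carrier P \<Longrightarrow> \<pi> (t p) = T (\<pi> p)"
  shows "mod_iso R P P t"
proof -
  interpret \<pi>: linear_map R P N \<pi> using proj_cover_linear_map[OF N pc] .
  have PP: "projective R P" and \<pi>_onto: "\<pi> ` carrier P = carrier N"
    using pc unfolding proj_cover_def by auto
  have T_inj: "inj_on T (carrier N)" and T_onto: "T ` carrier N = carrier N"
    using T unfolding mod_iso_def bij_betw_def by auto
  interpret t: linear_map R P P t using t by (rule linear_mapI[OF \<pi>.A.module_axioms \<pi>.A.module_axioms])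
  have t_onto: "t ` carrier P = carrier P"
  proof (rule proj_cover_endomorphism_surj[OF N pc t])
    fix p assume p: "p \<in> carrier P"
    have "\<pi> p \<in> T ` carrier N" using T_onto \<pi>.closed[OF p] by simp
    then obtain V where V: "\<pi> p = T V" "V \<in> carrier N" by (rule imageE)
    then have "V \<in> \<pi> ` carrier P" using \<pi>_onto by simp
    then obtain q where "V = \<pi> q" "q \<in> carrier P" by (rule imageE)
    then show "\<exists>q\<in>carrier P. \<pi> (t q) = \<pi> p" using V \<pi>t by auto
  qed
  then have "\<forall>p\<in>carrier P. \<exists>q\<in>carrier P. t q = p" by (metis imageE)
  then obtain \<sigma> where \<sigma>: "mod_hom R P P \<sigma>" and t\<sigma>: "\<forall>p\<in>carrier P. t (\<sigma> p) = p"
    by (rule projective_lift[OF PP t.linear_map_axioms mod_hom_id])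
  interpret \<sigma>: linear_map R P P \<sigma> using \<sigma> by (rule linear_mapI[OF \<pi>.A.module_axioms \<pi>.A.module_axioms])
  have \<sigma>_onto: "\<sigma> ` carrier P = carrier P"
  proof (rule proj_cover_endomorphism_surj[OF N pc \<sigma>])
    fix p assume p: "p \<in> carrier P"
    have "T (\<pi> (\<sigma> (t p))) = T (\<pi> p)" using \<pi>t[symmetric] t\<sigma> p \<sigma>.closed t.closed by simp
    then have "\<pi> (\<sigma> (t p)) = \<pi> p" using T_inj p \<pi>.closed \<sigma>.closed t.closed by (simp add: inj_on_eq_iff)
    then show "\<exists>q\<in>carrier P. \<pi> (\<sigma> q) = \<pi> p" using p t.closed by blast
  qed
  have "inj_on t (carrier P)"
  proof (rule inj_onI)
    fix p1 p2 assume p: "p1 \<in> carrier P" "p2 \<in> carrier P" and eq: "t p1 = t p2"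
    have "p1 \<in> \<sigma> ` carrier P" "p2 \<in> \<sigma> ` carrier P" using p \<sigma>_onto by simp_all
    then obtain q1 q2 where q: "p1 = \<sigma> q1" "q1 \<in> carrier P" "p2 = \<sigma> q2" "q2 \<in> carrier P"
      by (elim imageE)
    then have "q1 = q2" using eq t\<sigma> by simp
    then show "p1 = p2" using q by simp
  qed
  then show ?thesis unfolding mod_iso_def bij_betw_def using t t_onto by blast
qed

theorem proj_cover_automorphism:
  assumes N: "module R N" and pc: "proj_cover R N P \<pi>"
    and ann: "\<And>a U. a \<in> jacobson R \<Longrightarrow> U \<in> carrier N \<Longrightarrow> a \<odot>\<^bsub>N\<^esub> U = \<zero>\<^bsub>N\<^esub>"
    and T: "mod_iso R N N T"
  obtains t \<phi> where "mod_iso R P P t"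
    and "mod_iso R (quot P (carrier P) (ideal_mod (jacobson R) P)) N \<phi>"
    and "\<forall>U\<in>carrier (quot P (carrier P) (ideal_mod (jacobson R) P)).
           \<phi> (quot_map P (ideal_mod (jacobson R) P) t U) = T (\<phi> U)"
proof -
  let ?K = "ideal_mod (jacobson R) P"
  interpret \<pi>: linear_map R P N \<pi> using proj_cover_linear_map[OF N pc] .
  interpret T: linear_map R N N T using T unfolding mod_iso_def by (intro linear_mapI[OF N N]) blast
  have K: "{x \<in> carrier P. \<pi> x = \<zero>\<^bsub>N\<^esub>} = ?K" by (rule proj_cover_kernel_eq[OF N pc ann])
  have K_sub: "submodule ?K R P" using \<pi>.submodule_kernel unfolding K .
  obtain t where t: "mod_hom R P P t" and \<pi>t: "\<forall>p\<in>carrier P. \<pi> (t p) = T (\<pi> p)"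
    by (rule proj_cover_lift[OF N pc T.mod_hom])
  interpret t: linear_map R P P t using t by (rule linear_mapI[OF \<pi>.A.module_axioms \<pi>.A.module_axioms])
  have "t ` ?K \<subseteq> ?K" unfolding K[symmetric] using \<pi>t T.zero t.closed by auto
  then have "quot_map P ?K t (?K +>\<^bsub>P\<^esub> x) = ?K +>\<^bsub>P\<^esub> t x" if "x \<in> carrier P" for x
    using \<pi>.A.quot_map_rcos[OF K_sub t.linear_map_axioms _ that] by blast
  moreover have "induced_map \<pi> (?K +>\<^bsub>P\<^esub> x) = \<pi> x" if "x \<in> carrier P" for x
    using \<pi>.induced_map_rcos[OF K_sub _ that] K by blast
  ultimately have "induced_map \<pi> (quot_map P ?K t U) = T (induced_map \<pi> U)"
    if "U \<in> carrier (quot P (carrier P) ?K)" for U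
    using that \<pi>t t.closed by (auto elim!: quot_carrierE)
  moreover have "mod_iso R P P t" using proj_cover_lift_mod_iso[OF N pc T t] \<pi>t by blast
  moreover have "\<pi> ` carrier P = carrier N" using pc unfolding proj_cover_def by blast
  ultimately show ?thesis using that \<pi>.mod_iso_induced_map[unfolded K] by blast
qed

context linear_relation
begin

lemma smult_rel_sharp_mem_rel_flat:
  assumes I: "ideal I R" and IM: "ideal_mod I M \<subseteq> rel_fin M (C\<inverse>) <+>\<^bsub>M\<^esub> rel_fin M C"
    and a: "a \<in> I" and x: "x \<in> rel_sharp C"
  shows "a \<odot>\<^bsub>M\<^esub> x \<in> rel_flat M C"
proof (rule rel_sharp_Int_fin_sum_subset_rel_flat)
  have "I \<subseteq> carrier R" using I by (simp add: ideal.axioms(1) additive_subgroup.a_subset)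
  then show "a \<odot>\<^bsub>M\<^esub> x \<in> rel_sharp C"
    using a x submoduleE(4)[OF submodule_rel_sharp] by blast
  show "a \<odot>\<^bsub>M\<^esub> x \<in> rel_fin M (C\<inverse>) <+>\<^bsub>M\<^esub> rel_fin M C"
    using IM ideal_mod_smult_mem[OF \<open>I \<subseteq> carrier R\<close> a] x rel_sharp_subset_carrier by blast
qed

lemma sharp_quot_proj_cover_automorphism:
  assumes J: "\<And>a x. a \<in> jacobson R \<Longrightarrow> x \<in> rel_sharp C \<Longrightarrow> a \<odot>\<^bsub>M\<^esub> x \<in> rel_flat M C"
    and perfect: "perfect_wrt TYPE('c set) TYPE('p) R"
  obtains P :: "('a, 'p) module" and t \<phi> where "projective R P" and "mod_iso R P P t"
    and "mod_iso R (quot P (carrier P) (ideal_mod (jacobson R) P)) sharp_quot \<phi>"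
    and "\<forall>U\<in>carrier (quot P (carrier P) (ideal_mod (jacobson R) P)).
           \<phi> (quot_map P (ideal_mod (jacobson R) P) t U) = sharp_T M C (\<phi> U)"
proof -
  obtain P :: "('a, 'p) module" and \<pi> where pc: "proj_cover R sharp_quot P \<pi>"
    using perfect module_sharp_quot unfolding perfect_wrt_def by blast
  then have P: "projective R P" unfolding proj_cover_def by blast
  have "a \<odot>\<^bsub>sharp_quot\<^esub> U = \<zero>\<^bsub>sharp_quot\<^esub>" if "a \<in> jacobson R" "U \<in> carrier sharp_quot" for a U
    using that J unfolding jacobson_def
    by (intro quot_smult_eq_zero[OF submodule_rel_flat rel_sharp_subset_carrier]) auto
  then obtain t \<phi> where "mod_iso R P P t"
    and "mod_iso R (quot P (carrier P) (ideal_mod (jacobson R) P)) sharp_quot \<phi>"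
    and "\<forall>U\<in>carrier (quot P (carrier P) (ideal_mod (jacobson R) P)).
           \<phi> (quot_map P (ideal_mod (jacobson R) P) t U) = sharp_T M C (\<phi> U)"
    by (rule proj_cover_automorphism[OF module_sharp_quot pc _ sharp_T_mod_iso])
  with P show ?thesis by (rule that)
qed

end

theorem lemma4p12:
  fixes R :: "'r ring" and M :: "('r, 'm) module" and C :: "('m \<times> 'm) set" and I :: "'r set"
  assumes "module R M"
    and "lin_rel R M C"
    and "ideal I R"
    and "ideal_mod I M \<subseteq> rel_fin M (C\<inverse>) <+>\<^bsub>M\<^esub> rel_fin M C"
  shows "rel_sharp C \<inter> ideal_mod I M \<subseteq> rel_flat M C
     \<and> (\<forall>a\<in>I. \<forall>x\<in>rel_sharp C. a \<odot>\<^bsub>M\<^esub> x \<in> rel_flat M C)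
     \<and> (I = jacobson R \<and> perfect_wrt TYPE('m set) TYPE('p) R \<longrightarrow>
         (\<exists>(P :: ('r, 'p) module) t \<phi>.
            module R P \<and> projective R P \<and> mod_iso R P P t \<and>
            mod_iso R (quot P (carrier P) (ideal_mod I P)) (quot M (rel_sharp C) (rel_flat M C)) \<phi> \<and>
            (\<forall>U\<in>carrier (quot P (carrier P) (ideal_mod I P)).
               \<phi> (quot_map P (ideal_mod I P) t U) = sharp_T M C (\<phi> U))))"
proof -
  interpret linear_relation R M C
    using assms(1,2) by (simp add: linear_relation_def linear_relation_axioms_def plain_module_def)
  have flat: "\<forall>a\<in>I. \<forall>x\<in>rel_sharp C. a \<odot>\<^bsub>M\<^esub> x \<in> rel_flat M C"
    using smult_rel_sharp_mem_rel_flat[OF assms(3,4)] by blast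
  have "\<exists>(P :: ('r, 'p) module) t \<phi>. module R P \<and> projective R P \<and> mod_iso R P P t \<and>
      mod_iso R (quot P (carrier P) (ideal_mod I P)) sharp_quot \<phi> \<and>
      (\<forall>U\<in>carrier (quot P (carrier P) (ideal_mod I P)).
         \<phi> (quot_map P (ideal_mod I P) t U) = sharp_T M C (\<phi> U))"
    if IJ: "I = jacobson R" and perfect: "perfect_wrt TYPE('m set) TYPE('p) R"
  proof -
    have "\<And>a x. a \<in> jacobson R \<Longrightarrow> x \<in> rel_sharp C \<Longrightarrow> a \<odot>\<^bsub>M\<^esub> x \<in> rel_flat M C"
      using flat IJ by blast
    from sharp_quot_proj_cover_automorphism[OF this perfect]
    obtain P :: "('r, 'p) module" and t \<phi> where "projective R P" and "mod_iso R P P t"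
      and "mod_iso R (quot P (carrier P) (ideal_mod I P)) sharp_quot \<phi>"
      and "\<forall>U\<in>carrier (quot P (carrier P) (ideal_mod I P)).
             \<phi> (quot_map P (ideal_mod I P) t U) = sharp_T M C (\<phi> U)"
      unfolding IJ .
    then show ?thesis unfolding projective_def by blast
  qed
  then show ?thesis
    using rel_sharp_Int_fin_sum_subset_rel_flat assms(4) flat by blast
qed

end
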